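(* Let $$\begin{matrix} A_{10} &\subseteq & A_{11}\\ \cup & & \cup\\ A_{00} &\subseteq & A_{01}\end{matrix}$$ be a commuting square of finite pre-von Neumann algebras, meaning: each inclusion in the quadruple is a compatible pair (i.e. $t_{A_{11}}|_{A_{ij}}=t_{A_{ij}}$), for each $i,j\in\{0,1\}$ there is a $*$-preserving and trace-preserving $A_{ij}$-$A_{ij}$ bimodule retraction $E_{A_{ij}}:A_{11}\to A_{ij}$ for the inclusion $A_{ij}\subseteq A_{11}$, and $E_{A_{10}}E_{A_{01}}(a)=E_{A_{00}}(a)=E_{A_{01}}E_{A_{10}}(a)$ for all $a\in A_{11}$. For each $i,j$ let $M_{A_{ij}}=\lambda_{A_{ij}}(A_{ij})''$, let $\iota_{A_{ij}}:M_{A_{ij}}\to M_{A_{11}}$ be the normal inclusion and $E_{A_{ij}}:M_{A_{11}}\to M_{A_{ij}}$ the trace-preserving conditional expectation extending $E_{A_{ij}}$. Then $$\begin{matrix} M_{A_{10}} &\subseteq & M_{A_{11}}\\ \cup & & \cup\\ M_{A_{00}} &\subseteq & M_{A_{01}}\end{matrix}$$ is a commuting square of von Neumann algebras, i.e. for all $x\in M_{A_{11}}$, $$\iota_{A_{10}}E_{A_{10}}\iota_{A_{01}}E_{A_{01}}(x)=\iota_{A_{00}}E_{A_{00}}(x)=\iota_{A_{01}}E_{A_{01}}\iota_{A_{10}}E_{A_{10}}(x).$$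
   Context: A finite pre-von Neumann algebra is a complex unital $*$-algebra $A$ with a normalized trace $t$ such that $\langle a,b\rangle=t(b^*a)$ is an inner product and each left multiplication $\lambda_A(a)$ is bounded for the induced norm; $\mathcal{H}_A$ is its Hilbert space completion with canonical embedding $\Gamma:A\to\mathcal{H}_A$, $\Omega=\Gamma(1)$, $\lambda_A:A\to\mathcal{B}(\mathcal{H}_A)$ the left regular representation. For a compatible pair $A\subseteq B$ (unital inclusion with $t_B|_A=t_A$), $\mathcal{H}_A\subseteq\mathcal{H}_B$ with common vacuum $\Omega$, $J_B$ is the bounded extension of $\Gamma(b)\mapsto\Gamma(b^* )$, and the normal inclusion $\iota_A:M_A\to M_B$ is $\iota_A(x)(\Gamma(b))=J_B(\lambda_B(b^* )x^*\Omega)$. Given a $*$- and trace-preserving $A$-$A$ bimodule retraction $E_A:B\to A$, it extends to the unique trace-preserving conditional expectation $M_B\to M_A$ (with respect to the trace $x\mapsto\langle x\Omega,\Omega\rangle$), satisfying $E_A(\lambda_B(b))=\lambda_A(E_A(b))$. *)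

theory Defs
  imports Complex_Main
begin

text \<open>Data of a complex unital *-algebra with a trace, carried by a type 'a of class ring_1
  (ring structure from the type class, complex scalars, star and trace explicit).\<close>
record 'a pvn =
  asc :: "complex \<Rightarrow> 'a \<Rightarrow> 'a"
  ast :: "'a \<Rightarrow> 'a"
  atr :: "'a \<Rightarrow> complex"

record 'h hsp =
  hsc :: "complex \<Rightarrow> 'h \<Rightarrow> 'h"
  hip :: "'h \<Rightarrow> 'h \<Rightarrow> complex"

definition star_alg :: "('a::ring_1) pvn \<Rightarrow> bool" where
  "star_alg P \<longleftrightarrow>
     (\<forall>c a b. asc P c (a + b) = asc P c a + asc P c b) \<and>
     (\<forall>c d a. asc P (c + d) a = asc P c a + asc P d a) \<and>
     (\<forall>c d a. asc P (c * d) a = asc P c (asc P d a)) \<and>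
     (\<forall>a. asc P 1 a = a) \<and>
     (\<forall>c a b. asc P c (a * b) = asc P c a * b) \<and>
     (\<forall>c a b. asc P c (a * b) = a * asc P c b) \<and>
     (\<forall>a b. ast P (a + b) = ast P a + ast P b) \<and>
     (\<forall>c a. ast P (asc P c a) = asc P (cnj c) (ast P a)) \<and>
     (\<forall>a b. ast P (a * b) = ast P b * ast P a) \<and>
     (\<forall>a. ast P (ast P a) = a)"

text \<open>Finite pre-von Neumann algebra (the whole type is the algebra).\<close>
definition fin_pvn :: "('a::ring_1) pvn \<Rightarrow> bool" where
  "fin_pvn P \<longleftrightarrow> star_alg P \<and>
     (\<forall>a b. atr P (a + b) = atr P a + atr P b) \<and>
     (\<forall>c a. atr P (asc P c a) = c * atr P a) \<and>
     atr P 1 = 1 \<and>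
     (\<forall>a b. atr P (a * b) = atr P (b * a)) \<and>
     (\<forall>a b. atr P (ast P a * b) = cnj (atr P (ast P b * a))) \<and>
     (\<forall>a. Im (atr P (ast P a * a)) = 0 \<and> Re (atr P (ast P a * a)) \<ge> 0) \<and>
     (\<forall>a. atr P (ast P a * a) = 0 \<longrightarrow> a = 0) \<and>
     (\<forall>a. \<exists>C. \<forall>b. Re (atr P (ast P (a * b) * (a * b))) \<le> C * Re (atr P (ast P b * b)))"

text \<open>Unital *-subalgebra (with the restricted trace it is again a finite pre-vN algebra,
  and the inclusion is a compatible pair).\<close>
definition subalg :: "('a::ring_1) pvn \<Rightarrow> 'a set \<Rightarrow> bool" where
  "subalg P A \<longleftrightarrow> 1 \<in> A \<and>
     (\<forall>a\<in>A. \<forall>b\<in>A. a + b \<in> A \<and> a * b \<in> A) \<and>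
     (\<forall>c. \<forall>a\<in>A. asc P c a \<in> A) \<and>
     (\<forall>a\<in>A. ast P a \<in> A)"

definition retraction :: "('a::ring_1) pvn \<Rightarrow> 'a set \<Rightarrow> ('a \<Rightarrow> 'a) \<Rightarrow> bool" where
  "retraction P A E \<longleftrightarrow>
     (\<forall>a. E a \<in> A) \<and> (\<forall>a\<in>A. E a = a) \<and>
     (\<forall>a b. E (a + b) = E a + E b) \<and>
     (\<forall>x\<in>A. \<forall>y\<in>A. \<forall>a. E (x * a * y) = x * E a * y) \<and>
     (\<forall>a. E (ast P a) = ast P (E a)) \<and>
     (\<forall>a. atr P (E a) = atr P a)"

definition hnorm :: "('h::ab_group_add) hsp \<Rightarrow> 'h \<Rightarrow> real" where
  "hnorm H x = sqrt (Re (hip H x x))"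

definition hconv :: "('h::ab_group_add) hsp \<Rightarrow> (nat \<Rightarrow> 'h) \<Rightarrow> 'h \<Rightarrow> bool" where
  "hconv H X l \<longleftrightarrow> (\<forall>e>0. \<exists>N. \<forall>n\<ge>N. hnorm H (X n - l) < e)"

definition hcauchy :: "('h::ab_group_add) hsp \<Rightarrow> (nat \<Rightarrow> 'h) \<Rightarrow> bool" where
  "hcauchy H X \<longleftrightarrow> (\<forall>e>0. \<exists>N. \<forall>m\<ge>N. \<forall>n\<ge>N. hnorm H (X m - X n) < e)"

definition hilb :: "('h::ab_group_add) hsp \<Rightarrow> bool" where
  "hilb H \<longleftrightarrow>
     (\<forall>c x y. hsc H c (x + y) = hsc H c x + hsc H c y) \<and>
     (\<forall>c d x. hsc H (c + d) x = hsc H c x + hsc H d x) \<and>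
     (\<forall>c d x. hsc H (c * d) x = hsc H c (hsc H d x)) \<and>
     (\<forall>x. hsc H 1 x = x) \<and>
     (\<forall>x y z. hip H (x + y) z = hip H x z + hip H y z) \<and>
     (\<forall>c x y. hip H (hsc H c x) y = c * hip H x y) \<and>
     (\<forall>x y. hip H y x = cnj (hip H x y)) \<and>
     (\<forall>x. Im (hip H x x) = 0 \<and> Re (hip H x x) \<ge> 0) \<and>
     (\<forall>x. hip H x x = 0 \<longrightarrow> x = 0) \<and>
     (\<forall>X. hcauchy H X \<longrightarrow> (\<exists>l. hconv H X l))"

definition hcl :: "('h::ab_group_add) hsp \<Rightarrow> 'h set \<Rightarrow> 'h set" where
  "hcl H S = {x. \<exists>X. (\<forall>n. X n \<in> S) \<and> hconv H X x}"

text \<open>Isometric embedding \<Gamma> of the algebra into the Hilbert space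
  (the completion is the closure of its range).\<close>
definition emb :: "('a::ring_1) pvn \<Rightarrow> ('h::ab_group_add) hsp \<Rightarrow> ('a \<Rightarrow> 'h) \<Rightarrow> bool" where
  "emb P H \<Gamma> \<longleftrightarrow>
     (\<forall>a b. \<Gamma> (a + b) = \<Gamma> a + \<Gamma> b) \<and>
     (\<forall>c a. \<Gamma> (asc P c a) = hsc H c (\<Gamma> a)) \<and>
     (\<forall>a b. hip H (\<Gamma> a) (\<Gamma> b) = atr P (ast P b * a))"

text \<open>Bounded linear operators on a closed subspace K (normalised to be 0 outside K).\<close>
definition bop :: "('h::ab_group_add) hsp \<Rightarrow> 'h set \<Rightarrow> ('h \<Rightarrow> 'h) \<Rightarrow> bool" where
  "bop H K T \<longleftrightarrow>
     (\<forall>x\<in>K. T x \<in> K) \<and> (\<forall>x. x \<notin> K \<longrightarrow> T x = 0) \<and>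
     (\<forall>x\<in>K. \<forall>y\<in>K. T (x + y) = T x + T y) \<and>
     (\<forall>c. \<forall>x\<in>K. T (hsc H c x) = hsc H c (T x)) \<and>
     (\<exists>C. \<forall>x\<in>K. hnorm H (T x) \<le> C * hnorm H x)"

definition HA :: "('h::ab_group_add) hsp \<Rightarrow> ('a \<Rightarrow> 'h) \<Rightarrow> 'a set \<Rightarrow> 'h set" where
  "HA H \<Gamma> A = hcl H (\<Gamma> ` A)"

definition lam :: "('h::ab_group_add) hsp \<Rightarrow> ('a::ring_1 \<Rightarrow> 'h) \<Rightarrow> 'a set \<Rightarrow> 'a \<Rightarrow> ('h \<Rightarrow> 'h)" where
  "lam H \<Gamma> A a = (THE T. bop H (HA H \<Gamma> A) T \<and> (\<forall>b\<in>A. T (\<Gamma> b) = \<Gamma> (a * b)))"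

definition adj :: "('h::ab_group_add) hsp \<Rightarrow> 'h set \<Rightarrow> ('h \<Rightarrow> 'h) \<Rightarrow> ('h \<Rightarrow> 'h)" where
  "adj H K T = (THE S. bop H K S \<and> (\<forall>x\<in>K. \<forall>y\<in>K. hip H (T x) y = hip H x (S y)))"

definition comm :: "('h::ab_group_add) hsp \<Rightarrow> 'h set \<Rightarrow> ('h \<Rightarrow> 'h) set \<Rightarrow> ('h \<Rightarrow> 'h) set" where
  "comm H K S = {T. bop H K T \<and> (\<forall>s\<in>S. \<forall>x\<in>K. T (s x) = s (T x))}"

definition vN :: "('h::ab_group_add) hsp \<Rightarrow> ('a::ring_1 \<Rightarrow> 'h) \<Rightarrow> 'a set \<Rightarrow> ('h \<Rightarrow> 'h) set" where
  "vN H \<Gamma> A = comm H (HA H \<Gamma> A) (comm H (HA H \<Gamma> A) (lam H \<Gamma> A ` A))"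

definition Jop :: "('a::ring_1) pvn \<Rightarrow> ('h::ab_group_add) hsp \<Rightarrow> ('a \<Rightarrow> 'h) \<Rightarrow> 'a set \<Rightarrow> ('h \<Rightarrow> 'h)" where
  "Jop P H \<Gamma> B = (THE J.
     (\<forall>x. x \<notin> HA H \<Gamma> B \<longrightarrow> J x = 0) \<and>
     (\<forall>x\<in>HA H \<Gamma> B. \<forall>y\<in>HA H \<Gamma> B. J (x + y) = J x + J y) \<and>
     (\<forall>c. \<forall>x\<in>HA H \<Gamma> B. J (hsc H c x) = hsc H (cnj c) (J x)) \<and>
     (\<exists>C. \<forall>x\<in>HA H \<Gamma> B. hnorm H (J x) \<le> C * hnorm H x) \<and>
     (\<forall>b\<in>B. J (\<Gamma> b) = \<Gamma> (ast P b)))"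

definition iota :: "('a::ring_1) pvn \<Rightarrow> ('h::ab_group_add) hsp \<Rightarrow> ('a \<Rightarrow> 'h) \<Rightarrow> 'a set \<Rightarrow> 'a set
     \<Rightarrow> ('h \<Rightarrow> 'h) \<Rightarrow> ('h \<Rightarrow> 'h)" where
  "iota P H \<Gamma> A B x = (THE T. bop H (HA H \<Gamma> B) T \<and>
     (\<forall>b\<in>B. T (\<Gamma> b) = Jop P H \<Gamma> B (lam H \<Gamma> B (ast P b) (adj H (HA H \<Gamma> A) x (\<Gamma> 1)))))"

text \<open>The trace-preserving conditional expectation M_B \<rightarrow> M_A extending the retraction EA
  (trace on M_A is x \<mapsto> \<langle>x \<Omega>, \<Omega>\<rangle>; outside M_B the map is set to 0).\<close>
definition cexp :: "('a::ring_1) pvn \<Rightarrow> ('h::ab_group_add) hsp \<Rightarrow> ('a \<Rightarrow> 'h) \<Rightarrow> 'a set \<Rightarrow> 'a set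
     \<Rightarrow> ('a \<Rightarrow> 'a) \<Rightarrow> ('h \<Rightarrow> 'h) \<Rightarrow> ('h \<Rightarrow> 'h)" where
  "cexp P H \<Gamma> A B EA = (THE E.
     (\<forall>y. y \<notin> vN H \<Gamma> B \<longrightarrow> E y = (\<lambda>_. 0)) \<and>
     (\<forall>y\<in>vN H \<Gamma> B. E y \<in> vN H \<Gamma> A) \<and>
     (\<forall>x\<in>vN H \<Gamma> A. E (iota P H \<Gamma> A B x) = x) \<and>
     (\<forall>y1\<in>vN H \<Gamma> B. \<forall>y2\<in>vN H \<Gamma> B. E (\<lambda>v. y1 v + y2 v) = (\<lambda>v. E y1 v + E y2 v)) \<and>
     (\<forall>c. \<forall>y\<in>vN H \<Gamma> B. E (\<lambda>v. hsc H c (y v)) = (\<lambda>v. hsc H c (E y v))) \<and>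
     (\<forall>x\<in>vN H \<Gamma> A. \<forall>z\<in>vN H \<Gamma> A. \<forall>y\<in>vN H \<Gamma> B.
        E (iota P H \<Gamma> A B x \<circ> y \<circ> iota P H \<Gamma> A B z) = x \<circ> E y \<circ> z) \<and>
     (\<forall>y\<in>vN H \<Gamma> B. \<forall>v. Im (hip H (E (adj H (HA H \<Gamma> B) y \<circ> y) v) v) = 0 \<and>
                         Re (hip H (E (adj H (HA H \<Gamma> B) y \<circ> y) v) v) \<ge> 0) \<and>
     (\<forall>y\<in>vN H \<Gamma> B. hip H (E y (\<Gamma> 1)) (\<Gamma> 1) = hip H (y (\<Gamma> 1)) (\<Gamma> 1)) \<and>
     (\<forall>b\<in>B. E (lam H \<Gamma> B b) = lam H \<Gamma> A (EA b)))"

end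

theory Submission
  imports Defs
begin

text \<open>All Hilbert spaces \<open>H_A\<close> are closed subspaces \<open>hcl (\<Gamma> ` A)\<close> of the one space \<open>H\<close>
  of the big algebra, and everything is computed there. The conditional expectation
  \<open>M \<rightarrow> M_A\<close> is the compression \<open>y \<mapsto> e_A y e_A\<close> by the Jones projection \<open>e_A\<close> onto \<open>H_A\<close>:
  the commutation theorem \<open>M_A = \<rho>(A)'\<close> (proved with the conjugation \<open>J\<close>) shows that the
  compression lands in \<open>M_A\<close>, and bimodularity plus trace preservation force any map with
  the required properties to agree with it. The normal inclusion satisfies
  \<open>\<iota>_A(x) \<Omega> = x \<Omega>\<close> (its boundedness is a power-iteration argument), and \<open>\<Omega>\<close> is
  separating for \<open>M\<close>. So both sides of the commuting-square identity are determined by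
  their values at \<open>\<Omega>\<close>, which are \<open>e_A10 e_A01 (x \<Omega>)\<close> and \<open>e_A00 (x \<Omega>)\<close>; these agree
  because the bounded operators \<open>e_A10 e_A01\<close> and \<open>e_A00\<close> act on the dense set \<open>\<Gamma>(A11)\<close>
  as \<open>E10 E01 = E00\<close>.\<close>

lemma tendsto_zero_by_bound:
  fixes f :: "nat \<Rightarrow> 'b::real_normed_vector"
  assumes "\<And>n. norm (f n) \<le> g n" "g \<longlonglongrightarrow> 0"
  shows "f \<longlonglongrightarrow> 0"
proof (rule tendsto_0_le[OF assms(2), where K=1], rule always_eventually, rule allI)
  show "norm (f n) \<le> norm (g n) * 1" for n
    using assms(1)[of n] abs_ge_self[of "g n"] by simp
qed

lemma iterated_square_le:
  fixes c :: "nat \<Rightarrow> real"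
  assumes "\<And>k. 0 \<le> c k" and "\<And>k. (c k)^2 \<le> c (Suc k)"
  shows "c 0 ^ 2 ^ k \<le> c k"
proof (induction k)
  case (Suc k)
  have "c 0 ^ 2 ^ Suc k = (c 0 ^ 2 ^ k)^2" by (simp add: power_mult[symmetric] mult.commute)
  also have "\<dots> \<le> (c k)^2" using Suc assms(1)[of 0] by (simp add: power_mono)
  also have "\<dots> \<le> c (Suc k)" by (rule assms(2))
  finally show ?case .
qed simp

text \<open>Otherwise \<open>b k / r\<close> would grow at least like \<open>(b 0 / r) ^ 2 ^ k\<close>,
  hence faster than \<open>B ^ 2 ^ k\<close>.\<close>
lemma squaring_growth_bound:
  fixes b :: "nat \<Rightarrow> real"
  assumes nonneg: "\<And>k. 0 \<le> b k" and r: "r \<ge> 0" and sq: "\<And>k. (b k)^2 \<le> b (Suc k) * r"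
    and growth: "\<And>k. b k \<le> A * B ^ 2 ^ k" and B: "B > 0"
  shows "b 0 \<le> B * r"
proof (rule ccontr)
  assume "\<not> b 0 \<le> B * r"
  then have gt: "b 0 > B * r" by simp
  have "r \<noteq> 0"
  proof
    assume "r = 0"
    then have "(b 0)^2 \<le> 0" using sq[of 0] by simp
    then show False using gt \<open>r = 0\<close> by simp
  qed
  then have rp: "r > 0" using r by simp
  define c where "c k = b k / r" for k
  have "(c k)^2 \<le> c (Suc k)" for k
  proof -
    have "(c k)^2 = (b k)^2 / r^2" unfolding c_def by (simp add: power_divide)
    also have "\<dots> \<le> b (Suc k) * r / r^2" using sq[of k] rp by (simp add: divide_right_mono)
    also have "\<dots> = c (Suc k)" unfolding c_def using rp by (simp add: power2_eq_square)
    finally show ?thesis .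
  qed
  then have pw: "c 0 ^ 2 ^ k \<le> c k" for k
    using iterated_square_le[of c] nonneg rp unfolding c_def by simp
  define q where "q = c 0 / B"
  have q1: "q > 1" unfolding q_def c_def using gt rp B by (simp add: field_simps)
  have "q ^ k \<le> A / r" for k
  proof -
    have "q ^ k \<le> q ^ 2 ^ k" using q1 by (intro power_increasing) (simp_all add: less_imp_le)
    also have "\<dots> = c 0 ^ 2 ^ k / B ^ 2 ^ k" unfolding q_def by (simp add: power_divide)
    also have "\<dots> \<le> c k / B ^ 2 ^ k" using pw B by (simp add: divide_right_mono)
    also have "\<dots> \<le> (A * B ^ 2 ^ k / r) / B ^ 2 ^ k"
      unfolding c_def using growth[of k] rp B by (intro divide_right_mono) simp_all
    also have "\<dots> = A / r" using B by simp
    finally show ?thesis .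
  qed
  moreover obtain n where "A / r < q ^ n" using real_arch_pow[OF q1] by blast
  ultimately show False using not_le by blast
qed

section \<open>Complex Hilbert spaces\<close>

locale hilbert_space = fixes H :: "('h::ab_group_add) hsp" assumes hilb: "hilb H"
begin

abbreviation sc where "sc \<equiv> hsc H"
abbreviation ip where "ip \<equiv> hip H"
abbreviation nm where "nm \<equiv> hnorm H"

lemma sc_add: "sc c (x + y) = sc c x + sc c y"
  using hilb unfolding hilb_def by meson
lemma sc_add_scalar: "sc (c + d) x = sc c x + sc d x"
  using hilb unfolding hilb_def by blast
lemma sc_mult: "sc (c * d) x = sc c (sc d x)"
  using hilb unfolding hilb_def by blast
lemma sc_one [simp]: "sc 1 x = x"
  using hilb unfolding hilb_def by blast
lemma ip_add_left: "ip (x + y) z = ip x z + ip y z"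
  using hilb unfolding hilb_def by blast
lemma ip_sc_left: "ip (sc c x) y = c * ip x y"
  using hilb unfolding hilb_def by blast
lemma ip_swap: "ip y x = cnj (ip x y)"
  using hilb unfolding hilb_def by blast
lemma ip_self_nonneg: "Im (ip x x) = 0" "Re (ip x x) \<ge> 0"
  using hilb unfolding hilb_def by blast+
lemma ip_self_eq_0D: "ip x x = 0 \<Longrightarrow> x = 0"
  using hilb unfolding hilb_def by blast
lemma hcauchy_hconv: "hcauchy H X \<Longrightarrow> \<exists>l. hconv H X l"
  using hilb unfolding hilb_def by blast

lemma sc_zero_left [simp]: "sc 0 x = 0"
  using sc_add_scalar[of 0 0 x] by simp
lemma sc_zero_right [simp]: "sc c 0 = 0"
  using sc_add[of c 0 0] by simp
lemma sc_minus: "sc c (- x) = - sc c x"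
  using sc_add[of c x "-x"] minus_unique[of "sc c x" "sc c (-x)"] by simp
lemma sc_diff: "sc c (x - y) = sc c x - sc c y"
  using sc_add[of c x "-y"] sc_minus by simp
lemma sc_minus_one: "sc (-1) x = - x"
  using sc_add_scalar[of 1 "-1" x] minus_unique[of x "sc (-1) x"] by simp

lemma ip_add_right: "ip x (y + z) = ip x y + ip x z"
  using ip_swap[of x "y+z"] ip_add_left[of y z x] ip_swap[of x y] ip_swap[of x z] by simp
lemma ip_sc_right: "ip x (sc c y) = cnj c * ip x y"
  using ip_swap[of x "sc c y"] ip_sc_left[of c y x] ip_swap[of x y] by simp
lemma ip_zero_left [simp]: "ip 0 y = 0" using ip_sc_left[of 0 0 y] by simp
lemma ip_zero_right [simp]: "ip x 0 = 0" using ip_sc_right[of x 0 0] by simp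
lemma ip_minus_left: "ip (- x) y = - ip x y" using ip_sc_left[of "-1" x y] sc_minus_one by simp
lemma ip_minus_right: "ip x (- y) = - ip x y" using ip_sc_right[of x "-1" y] sc_minus_one by simp
lemma ip_diff_left: "ip (x - y) z = ip x z - ip y z"
  using ip_add_left[of x "-y" z] ip_minus_left by simp
lemma ip_diff_right: "ip x (y - z) = ip x y - ip x z"
  using ip_add_right[of x y "-z"] ip_minus_right by simp

lemmas ip_simps = ip_add_left ip_add_right ip_sc_left ip_sc_right
  ip_diff_left ip_diff_right ip_minus_left ip_minus_right

lemma ip_self: "ip x x = complex_of_real (Re (ip x x))"
  using ip_self_nonneg[of x] by (simp add: complex_eq_iff)

lemma nm_sq: "(nm x)^2 = Re (ip x x)"
  unfolding hnorm_def using ip_self_nonneg(2)[of x] by simp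
lemma nm_nonneg [simp]: "nm x \<ge> 0"
  unfolding hnorm_def using ip_self_nonneg(2)[of x] by simp
lemma nm_zero [simp]: "nm 0 = 0"
  unfolding hnorm_def by simp
lemma nm_eq_0_iff: "nm x = 0 \<longleftrightarrow> x = 0"
proof
  assume "nm x = 0"
  then have "ip x x = 0" using nm_sq[of x] ip_self[of x] by simp
  then show "x = 0" by (rule ip_self_eq_0D)
qed simp
lemma nm_pos: "x \<noteq> 0 \<Longrightarrow> nm x > 0"
  using nm_eq_0_iff nm_nonneg[of x] by (simp add: less_le)
lemma ip_self_nm: "ip x x = complex_of_real ((nm x)^2)"
  using ip_self nm_sq by simp

lemma nm_sc: "nm (sc c x) = cmod c * nm x"
proof -
  have "ip (sc c x) (sc c x) = complex_of_real ((cmod c)^2) * ip x x"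
    using complex_norm_square[of c] by (simp add: ip_sc_left ip_sc_right mult.assoc)
  then have "Re (ip (sc c x) (sc c x)) = (cmod c)^2 * Re (ip x x)"
    by simp
  then show ?thesis unfolding hnorm_def by (simp add: real_sqrt_mult)
qed
lemma nm_minus: "nm (- x) = nm x"
  using nm_sc[of "-1" x] sc_minus_one by simp
lemma nm_diff_commute: "nm (x - y) = nm (y - x)"
  using nm_minus[of "x - y"] by simp

text \<open>Both the Cauchy-Schwarz inequality and the orthogonality of best approximations come
  from the nonnegativity of this quantity.\<close>
lemma nm_sq_remove_component:
  assumes "k \<noteq> 0"
  shows "Re (ip (w - sc (ip w k / ip k k) k) (w - sc (ip w k / ip k k) k))
    = (nm w)^2 - (cmod (ip w k))^2 / (nm k)^2"
proof -
  define t where "t = ip w k / ip k k"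
  have kk: "ip k k = complex_of_real ((nm k)^2)" by (rule ip_self_nm)
  have nk: "nm k > 0" using assms by (rule nm_pos)
  have "ip (w - sc t k) (w - sc t k) = ip w w - cnj t * ip w k - t * ip k w + t * cnj t * ip k k"
    by (simp add: ip_simps algebra_simps)
  also have "t * cnj t * ip k k = ip w k * cnj (ip w k) / ip k k"
    unfolding t_def using kk nk by (simp add: field_simps)
  also have "cnj t * ip w k = ip w k * cnj (ip w k) / ip k k"
    unfolding t_def using kk by (simp add: field_simps)
  also have "t * ip k w = ip w k * cnj (ip w k) / ip k k"
    unfolding t_def using ip_swap[of k w] by simp
  finally have "ip (w - sc t k) (w - sc t k) = ip w w - ip w k * cnj (ip w k) / ip k k" by simp
  also have "ip w k * cnj (ip w k) = complex_of_real ((cmod (ip w k))^2)"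
    using complex_norm_square[of "ip w k"] by simp
  finally show ?thesis
    using kk nm_sq[of w] unfolding t_def
    by (simp del: of_real_power add: of_real_power[symmetric] Re_divide_of_real)
qed

lemma cauchy_schwarz: "cmod (ip x y) \<le> nm x * nm y"
proof (cases "y = 0")
  case False
  have ny: "(nm y)^2 > 0" using nm_pos[OF False] by simp
  have "0 \<le> (nm x)^2 - (cmod (ip x y))^2 / (nm y)^2"
    using nm_sq_remove_component[OF False, of x] ip_self_nonneg(2) by metis
  then have "(cmod (ip x y))^2 \<le> (nm x)^2 * (nm y)^2"
    using ny by (simp add: field_simps)
  then have "(cmod (ip x y))^2 \<le> (nm x * nm y)^2"
    by (simp add: power_mult_distrib)
  then show ?thesis by (rule power2_le_imp_le) simp
qed simp

lemma nm_add_sq: "(nm (x + y))^2 = (nm x)^2 + 2 * Re (ip x y) + (nm y)^2"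
proof -
  have "ip (x+y) (x+y) = ip x x + (ip x y + cnj (ip x y)) + ip y y"
    using ip_swap[of y x] by (simp add: ip_simps)
  then show ?thesis using nm_sq by simp
qed

lemma nm_triangle: "nm (x + y) \<le> nm x + nm y"
proof -
  have "Re (ip x y) \<le> nm x * nm y"
    using cauchy_schwarz[of x y] complex_Re_le_cmod[of "ip x y"] by linarith
  then have "(nm (x + y))^2 \<le> (nm x + nm y)^2"
    using nm_add_sq[of x y] by (simp add: power2_sum)
  then show ?thesis using power2_le_imp_le by simp
qed

lemma nm_triangle_diff: "nm (x - z) \<le> nm (x - y) + nm (y - z)"
  using nm_triangle[of "x - y" "y - z"] by simp

lemma nm_reverse_triangle: "nm x - nm y \<le> nm (x - y)"
  using nm_triangle[of "x - y" y] by simp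

lemma parallelogram: "(nm (x + y))^2 + (nm (x - y))^2 = 2 * (nm x)^2 + 2 * (nm y)^2"
proof -
  have "(nm (x - y))^2 = (nm x)^2 - 2 * Re (ip x y) + (nm y)^2"
    using nm_add_sq[of x "-y"] nm_minus[of y] by (simp add: ip_minus_right)
  then show ?thesis using nm_add_sq[of x y] by simp
qed


lemma hconv_iff: "hconv H X l \<longleftrightarrow> (\<lambda>n. nm (X n - l)) \<longlonglongrightarrow> 0"
  unfolding hconv_def LIMSEQ_def dist_real_def by simp

lemma hconv_by_bound:
  assumes "\<And>n. nm (Y n - y) \<le> g n" "g \<longlonglongrightarrow> 0"
  shows "hconv H Y y"
  unfolding hconv_iff
  by (rule tendsto_zero_by_bound[OF _ assms(2)]) (use assms(1) in simp)

lemma hconv_const: "hconv H (\<lambda>n. x) x"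
  unfolding hconv_iff by simp

lemma hconv_add:
  assumes "hconv H X x" "hconv H Y y"
  shows "hconv H (\<lambda>n. X n + Y n) (x + y)"
proof (rule hconv_by_bound)
  show "nm (X n + Y n - (x + y)) \<le> nm (X n - x) + nm (Y n - y)" for n
    using nm_triangle[of "X n - x" "Y n - y"] by (simp add: add_diff_add)
  show "(\<lambda>n. nm (X n - x) + nm (Y n - y)) \<longlonglongrightarrow> 0"
    using assms unfolding hconv_iff by (rule tendsto_add_zero)
qed

lemma hconv_sc:
  assumes "hconv H X x"
  shows "hconv H (\<lambda>n. sc c (X n)) (sc c x)"
proof (rule hconv_by_bound)
  show "nm (sc c (X n) - sc c x) \<le> cmod c * nm (X n - x)" for n
    by (simp add: sc_diff[symmetric] nm_sc)
  show "(\<lambda>n. cmod c * nm (X n - x)) \<longlonglongrightarrow> 0"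
    using assms unfolding hconv_iff by (rule tendsto_mult_right_zero)
qed

lemma hconv_minus: "hconv H X x \<Longrightarrow> hconv H (\<lambda>n. - X n) (- x)"
  using hconv_sc[of X x "-1"] by (simp add: sc_minus_one)

lemma hconv_diff: "hconv H X x \<Longrightarrow> hconv H Y y \<Longrightarrow> hconv H (\<lambda>n. X n - Y n) (x - y)"
  using hconv_add[of X x "\<lambda>n. - Y n" "-y"] hconv_minus[of Y y] by simp

lemma hconv_unique: assumes "hconv H X x" "hconv H X y" shows "x = y"
proof -
  have "(\<lambda>n. nm (X n - x) + nm (X n - y)) \<longlonglongrightarrow> 0"
    using assms tendsto_add_zero unfolding hconv_iff by fastforce
  moreover have "nm (x - y) \<le> nm (X n - x) + nm (X n - y)" for n
  proof -
    have "nm (x - y) \<le> nm (x - X n) + nm (X n - y)" by (rule nm_triangle_diff)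
    thus ?thesis using nm_diff_commute[of x "X n"] by simp
  qed
  ultimately have "nm (x - y) \<le> 0"
    by (intro LIMSEQ_le_const) auto
  then have "nm (x - y) = 0" using nm_nonneg[of "x - y"] by linarith
  thus ?thesis using nm_eq_0_iff by simp
qed

lemma hconv_nm: assumes "hconv H X x" shows "(\<lambda>n. nm (X n)) \<longlonglongrightarrow> nm x"
proof -
  have "norm (nm (X n) - nm x) \<le> nm (X n - x)" for n
  proof -
    have "nm (X n) - nm x \<le> nm (X n - x)" by (rule nm_reverse_triangle)
    moreover have "nm x - nm (X n) \<le> nm (X n - x)" using nm_reverse_triangle[of x "X n"] nm_diff_commute by simp
    ultimately show ?thesis by (simp add: abs_le_iff)
  qed
  then have "(\<lambda>n. nm (X n) - nm x) \<longlonglongrightarrow> 0"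
    using assms unfolding hconv_iff by (rule tendsto_zero_by_bound)
  thus ?thesis by (simp add: LIM_zero_iff)
qed

lemma hconv_ip: assumes "hconv H X x" "hconv H Y y"
  shows "(\<lambda>n. ip (X n) (Y n)) \<longlonglongrightarrow> ip x y"
proof -
  have "\<And>n. ip (X n) (Y n) - ip x y = ip (X n - x) (Y n) + ip x (Y n - y)"
    by (simp add: ip_simps)
  then have "norm (ip (X n) (Y n) - ip x y) \<le> nm (X n - x) * nm (Y n) + nm x * nm (Y n - y)" for n
  proof -
    have "norm (ip (X n) (Y n) - ip x y) \<le> norm (ip (X n - x) (Y n)) + norm (ip x (Y n - y))"
      using \<open>\<And>n. ip (X n) (Y n) - ip x y = _\<close>[of n] by (simp add: norm_triangle_ineq)
    also have "\<dots> \<le> nm (X n - x) * nm (Y n) + nm x * nm (Y n - y)"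
      by (intro add_mono cauchy_schwarz)
    finally show ?thesis .
  qed
  moreover have "(\<lambda>n. nm (X n - x) * nm (Y n) + nm x * nm (Y n - y)) \<longlonglongrightarrow> 0 * nm y + nm x * 0"
    using assms hconv_nm[OF assms(2)] unfolding hconv_iff
    by (intro tendsto_intros) auto
  then have "(\<lambda>n. nm (X n - x) * nm (Y n) + nm x * nm (Y n - y)) \<longlonglongrightarrow> 0" by simp
  ultimately have "(\<lambda>n. ip (X n) (Y n) - ip x y) \<longlonglongrightarrow> 0"
    by (rule tendsto_zero_by_bound)
  thus ?thesis by (simp add: LIM_zero_iff)
qed

lemma hconv_cauchy: assumes "hconv H X x" shows "hcauchy H X"
  unfolding hcauchy_def
proof (intro allI impI)
  fix e :: real assume "e > 0"
  then obtain N where N: "\<forall>n\<ge>N. nm (X n - x) < e/2"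
    using assms[unfolded hconv_def, rule_format, of "e/2"] \<open>e > 0\<close> by auto
  show "\<exists>N. \<forall>m\<ge>N. \<forall>n\<ge>N. nm (X m - X n) < e"
  proof (intro exI allI impI)
    fix m n assume "m \<ge> N" "n \<ge> N"
    have "nm (X m - X n) \<le> nm (X m - x) + nm (x - X n)" by (rule nm_triangle_diff)
    also have "nm (x - X n) = nm (X n - x)" by (rule nm_diff_commute)
    finally show "nm (X m - X n) < e" using N[rule_format, OF \<open>m \<ge> N\<close>] N[rule_format, OF \<open>n \<ge> N\<close>] by linarith
  qed
qed

definition subspace :: "'h set \<Rightarrow> bool" where
  "subspace K \<longleftrightarrow> 0 \<in> K \<and> (\<forall>x\<in>K. \<forall>y\<in>K. x + y \<in> K) \<and> (\<forall>c. \<forall>x\<in>K. sc c x \<in> K)"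

definition closed_subspace :: "'h set \<Rightarrow> bool" where
  "closed_subspace K \<longleftrightarrow> subspace K \<and> hcl H K \<subseteq> K"

lemma subspace_zero: "subspace K \<Longrightarrow> 0 \<in> K" unfolding subspace_def by blast
lemma subspace_add: "subspace K \<Longrightarrow> x \<in> K \<Longrightarrow> y \<in> K \<Longrightarrow> x + y \<in> K" unfolding subspace_def by blast
lemma subspace_sc: "subspace K \<Longrightarrow> x \<in> K \<Longrightarrow> sc c x \<in> K" unfolding subspace_def by blast
lemma subspace_minus: "subspace K \<Longrightarrow> x \<in> K \<Longrightarrow> - x \<in> K" using subspace_sc[of K x "-1"] sc_minus_one by simp
lemma subspace_diff: "subspace K \<Longrightarrow> x \<in> K \<Longrightarrow> y \<in> K \<Longrightarrow> x - y \<in> K"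
  using subspace_add[of K x "-y"] subspace_minus by simp

lemma hclI: "(\<And>n. X n \<in> S) \<Longrightarrow> hconv H X x \<Longrightarrow> x \<in> hcl H S"
  unfolding hcl_def by blast

lemma hcl_superset: "S \<subseteq> hcl H S"
  using hclI[of "\<lambda>n. _"] hconv_const by blast

lemma hcl_hcl_subset: "hcl H (hcl H S) \<subseteq> hcl H S"
proof
  fix x assume "x \<in> hcl H (hcl H S)"
  then obtain Y where Y: "\<And>n. Y n \<in> hcl H S" "hconv H Y x" unfolding hcl_def by blast
  have "\<forall>n. \<exists>s. s \<in> S \<and> nm (s - Y n) < 1 / Suc n"
  proof
    fix n
    obtain Z where Z: "\<And>m. Z m \<in> S" "hconv H Z (Y n)" using Y(1) unfolding hcl_def by blast
    then obtain m where "nm (Z m - Y n) < 1 / Suc n"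
      using Z(2)[unfolded hconv_def, rule_format, of "1 / Suc n"] by auto
    thus "\<exists>s. s \<in> S \<and> nm (s - Y n) < 1 / Suc n" using Z(1) by blast
  qed
  then have "\<exists>X. \<forall>n. X n \<in> S \<and> nm (X n - Y n) < 1 / Suc n" by (rule choice)
  then obtain X where "\<forall>n. X n \<in> S \<and> nm (X n - Y n) < 1 / Suc n" by blast
  then have X: "\<And>n. X n \<in> S" "\<And>n. nm (X n - Y n) < 1 / Suc n" by auto
  have "hconv H X x"
  proof (rule hconv_by_bound)
    show "nm (X n - x) \<le> 1 / Suc n + nm (Y n - x)" for n
      using nm_triangle_diff[of "X n" x "Y n"] X(2)[of n] by linarith
    show "(\<lambda>n. 1 / real (Suc n) + nm (Y n - x)) \<longlonglongrightarrow> 0"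
      using Y(2) unfolding hconv_iff
      using LIMSEQ_Suc[OF lim_inverse_n'] tendsto_add[of _ 0 _ _ 0] by fastforce
  qed
  thus "x \<in> hcl H S" by (rule hclI[OF X(1)])
qed

lemma closed_subspace_hcl: assumes "subspace S" shows "closed_subspace (hcl H S)"
  unfolding closed_subspace_def subspace_def
proof (intro conjI ballI allI)
  show "0 \<in> hcl H S" using hcl_superset subspace_zero[OF assms] by blast
  show "x + y \<in> hcl H S" if hxy: "x \<in> hcl H S" "y \<in> hcl H S" for x y
  proof -
    obtain X where X: "\<And>n. X n \<in> S" "hconv H X x"
      using hxy(1) unfolding hcl_def by blast
    obtain Y where Y: "\<And>n. Y n \<in> S" "hconv H Y y"
      using hxy(2) unfolding hcl_def by blast
    show ?thesis
    proof (rule hclI[of "\<lambda>n. X n + Y n"])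
      show "X n + Y n \<in> S" for n using subspace_add[OF assms X(1) Y(1)] .
      show "hconv H (\<lambda>n. X n + Y n) (x + y)" using hconv_add[OF X(2) Y(2)] .
    qed
  qed
  show "sc c x \<in> hcl H S" if hx: "x \<in> hcl H S" for c x
  proof -
    obtain X where X: "\<And>n. X n \<in> S" "hconv H X x" using hx unfolding hcl_def by blast
    show ?thesis
    proof (rule hclI[of "\<lambda>n. sc c (X n)"])
      show "sc c (X n) \<in> S" for n using subspace_sc[OF assms X(1)] .
      show "hconv H (\<lambda>n. sc c (X n)) (sc c x)" using hconv_sc[OF X(2)] .
    qed
  qed
  show "hcl H (hcl H S) \<subseteq> hcl H S" by (rule hcl_hcl_subset)
qed

lemma closed_subspace_imp_subspace: "closed_subspace K \<Longrightarrow> subspace K" unfolding closed_subspace_def by blast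
lemma closed_subspace_hconv: "closed_subspace K \<Longrightarrow> (\<And>n. X n \<in> K) \<Longrightarrow> hconv H X x \<Longrightarrow> x \<in> K"
  unfolding closed_subspace_def using hclI[of X K x] by blast

lemma closed_subspace_UNIV: "closed_subspace UNIV"
  unfolding closed_subspace_def subspace_def by simp

subsection \<open>Projection theorem\<close>

lemma minimizer_orthogonal:
  assumes K: "subspace K" and p: "p \<in> K" and min: "\<And>k. k \<in> K \<Longrightarrow> nm (v - p) \<le> nm (v - k)"
    and k: "k \<in> K"
  shows "ip (v - p) k = 0"
proof (rule ccontr)
  assume ne: "ip (v - p) k \<noteq> 0"
  then have k0: "k \<noteq> 0" by auto
  define t where "t = ip (v - p) k / ip k k"
  have "p + sc t k \<in> K" using K p k subspace_add subspace_sc by blast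
  then have "nm (v - p) \<le> nm (v - (p + sc t k))" by (rule min)
  then have "(nm (v - p))^2 \<le> (nm ((v - p) - sc t k))^2"
    by (simp add: diff_diff_eq power_mono)
  also have "\<dots> = (nm (v - p))^2 - (cmod (ip (v - p) k))^2 / (nm k)^2"
    using nm_sq_remove_component[OF k0, of "v - p"] nm_sq unfolding t_def by simp
  finally have "(cmod (ip (v - p) k))^2 / (nm k)^2 \<le> 0" by simp
  moreover have "(cmod (ip (v - p) k))^2 / (nm k)^2 > 0"
    using ne k0 nm_eq_0_iff nm_nonneg by (simp add: less_eq_real_def)
  ultimately show False by simp
qed

lemma minimizing_pair_estimate:
  assumes K: "subspace K" and d0: "d \<ge> 0" and dle: "\<And>k. k \<in> K \<Longrightarrow> d \<le> nm (v - k)"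
    and k: "k \<in> K" "nm (v - k) \<le> d + e" "0 \<le> e" "e \<le> 1"
    and k': "k' \<in> K" "nm (v - k') \<le> d + e'" "0 \<le> e'" "e' \<le> 1"
  shows "(nm (k - k'))^2 \<le> 4 * d * (e + e') + 2 * e + 2 * e'"
proof -
  define x where "x = v - k"
  define y where "y = v - k'"
  define mid where "mid = sc (1/2) (k + k')"
  have midK: "mid \<in> K" unfolding mid_def using K k k' subspace_add subspace_sc by blast
  have "x + y = sc 2 (v - mid)"
  proof -
    have "sc 2 (v - mid) = sc 2 v - sc (2 * (1/2)) (k + k')"
      unfolding mid_def by (simp add: sc_diff sc_mult[symmetric])
    also have "sc 2 v = v + v" using sc_add_scalar[of 1 1 v] by simp
    finally show ?thesis unfolding x_def y_def by (simp add: algebra_simps)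
  qed
  then have "nm (x + y) = 2 * nm (v - mid)" by (simp add: nm_sc)
  then have xy: "nm (x + y) \<ge> 2 * d" using dle[OF midK] by simp
  have "x - y = k' - k" unfolding x_def y_def by simp
  then have "(nm (k - k'))^2 = 2 * (nm x)^2 + 2 * (nm y)^2 - (nm (x + y))^2"
    using parallelogram[of x y] nm_diff_commute[of k k'] by simp
  also have "(nm (x + y))^2 \<ge> (2 * d)^2" using power_mono[OF xy, of 2] d0 by simp
  moreover have "(nm x)^2 \<le> (d + e)^2" using k(2) unfolding x_def by (simp add: power_mono)
  moreover have "(nm y)^2 \<le> (d + e')^2" using k'(2) unfolding y_def by (simp add: power_mono)
  ultimately have "(nm (k - k'))^2 \<le> 2 * (d + e)^2 + 2 * (d + e')^2 - (2 * d)^2"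
    by linarith
  also have "\<dots> = 4 * d * (e + e') + 2 * e * e + 2 * e' * e'"
    by (simp add: power2_eq_square algebra_simps)
  also have "\<dots> \<le> 4 * d * (e + e') + 2 * e + 2 * e'"
    using mult_right_mono[of e 1 e] mult_right_mono[of e' 1 e'] k k' by simp
  finally show ?thesis .
qed

lemma minimizing_sequence_hcauchy:
  assumes K: "subspace K" and d0: "d \<ge> 0" and dle: "\<And>k. k \<in> K \<Longrightarrow> d \<le> nm (v - k)"
    and kK: "\<And>n. k n \<in> K" and kd: "\<And>n. nm (v - k n) < d + 1 / Suc n"
  shows "hcauchy H k"
  unfolding hcauchy_def
proof (intro allI impI)
  fix e :: real assume e: "e > 0"
  obtain N :: nat where N: "(8 * d + 4) / e^2 < real N"
    using reals_Archimedean2 by blast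
  have Npos: "real N > 0" using N e d0
    by (smt (verit, best) divide_nonneg_pos zero_less_power)
  show "\<exists>N. \<forall>m\<ge>N. \<forall>n\<ge>N. nm (k m - k n) < e"
  proof (intro exI allI impI)
    fix m n assume mN: "m \<ge> N" and nN: "n \<ge> N"
    have im: "1 / real (Suc m) \<le> 1 / real N" using mN Npos by (simp add: frac_le)
    have inn: "1 / real (Suc n) \<le> 1 / real N" using nN Npos by (simp add: frac_le)
    have "0 \<le> 1 / real (Suc i)" "1 / real (Suc i) \<le> 1" for i by auto
    then have "(nm (k m - k n))^2 \<le> 4 * d * (1 / Suc m + 1 / Suc n) + 2 * (1 / Suc m) + 2 * (1 / Suc n)"
      using minimizing_pair_estimate[OF K d0 dle kK less_imp_le[OF kd] _ _ kK less_imp_le[OF kd]]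
      by blast
    also have "\<dots> \<le> 4 * d * (2 / real N) + 2 * (1 / real N) + 2 * (1 / real N)"
      using im inn d0 by (intro add_mono mult_left_mono) auto
    also have "\<dots> = (8 * d + 4) / real N" by (simp add: field_simps add_divide_distrib)
    also have "\<dots> < e^2" using N Npos e by (simp add: field_simps)
    finally have "(nm (k m - k n))^2 < e^2" .
    then show "nm (k m - k n) < e" using e by (simp add: power_less_imp_less_base less_imp_le)
  qed
qed

lemma proj_exists:
  assumes K: "closed_subspace K"
  shows "\<exists>p\<in>K. \<forall>k\<in>K. ip (v - p) k = 0"
proof -
  have S: "subspace K" using K closed_subspace_imp_subspace by blast
  define d where "d = Inf ((\<lambda>k. nm (v - k)) ` K)"
  have ne: "(\<lambda>k. nm (v - k)) ` K \<noteq> {}" using subspace_zero[OF S] by blast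
  have dle: "d \<le> nm (v - k)" if "k \<in> K" for k
    unfolding d_def using that by (intro cInf_lower bdd_belowI[of _ 0]) auto
  have d0: "d \<ge> 0" unfolding d_def using ne by (rule cInf_greatest) auto
  have "\<forall>n. \<exists>k. k \<in> K \<and> nm (v - k) < d + 1 / Suc n"
  proof
    fix n
    have "d < d + 1 / Suc n" by simp
    then show "\<exists>k. k \<in> K \<and> nm (v - k) < d + 1 / Suc n"
      unfolding d_def using cInf_lessD[OF ne] by blast
  qed
  then obtain k where "\<forall>n. k n \<in> K \<and> nm (v - k n) < d + 1 / Suc n"
    by (rule choice[THEN exE])
  then have kK: "\<And>n. k n \<in> K" and kd: "\<And>n. nm (v - k n) < d + 1 / Suc n"
    by auto
  obtain p where p: "hconv H k p"
    using hcauchy_hconv minimizing_sequence_hcauchy[OF S d0 dle kK kd] by blast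
  have pK: "p \<in> K" using closed_subspace_hconv[OF K kK p] .
  have "(\<lambda>n. nm (v - k n)) \<longlonglongrightarrow> nm (v - p)"
    using hconv_nm[OF hconv_diff[OF hconv_const p]] .
  moreover have "(\<lambda>n. d + 1 / real (Suc n)) \<longlonglongrightarrow> d + 0"
    by (intro tendsto_intros LIMSEQ_Suc[OF lim_inverse_n'])
  ultimately have "nm (v - p) \<le> d + 0"
    by (rule LIMSEQ_le) (use kd less_imp_le in auto)
  then have "\<And>k. k \<in> K \<Longrightarrow> nm (v - p) \<le> nm (v - k)" using dle by fastforce
  then show ?thesis using minimizer_orthogonal[OF S pK] pK by blast
qed

definition proj :: "'h set \<Rightarrow> 'h \<Rightarrow> 'h" where
  "proj K v = (THE p. p \<in> K \<and> (\<forall>k\<in>K. ip (v - p) k = 0))"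

lemma proj_unique:
  assumes K: "closed_subspace K" and "p \<in> K" "\<forall>k\<in>K. ip (v - p) k = 0" "q \<in> K" "\<forall>k\<in>K. ip (v - q) k = 0"
  shows "p = q"
proof -
  have "p - q \<in> K" using assms subspace_diff closed_subspace_imp_subspace by blast
  then have "ip (v - q) (p - q) - ip (v - p) (p - q) = 0" using assms by simp
  then have "ip ((v - q) - (v - p)) (p - q) = 0" by (simp only: ip_diff_left)
  then have "ip (p - q) (p - q) = 0" by simp
  thus ?thesis using ip_self_eq_0D[of "p - q"] by simp
qed

lemma proj_char:
  assumes K: "closed_subspace K"
  shows "proj K v \<in> K \<and> (\<forall>k\<in>K. ip (v - proj K v) k = 0)"
proof -
  obtain p where ex: "p \<in> K \<and> (\<forall>k\<in>K. ip (v - p) k = 0)" using proj_exists[OF K] by blast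
  have un: "\<And>q. q \<in> K \<and> (\<forall>k\<in>K. ip (v - q) k = 0) \<Longrightarrow> q = p"
    using proj_unique[OF K] ex by blast
  show ?thesis unfolding proj_def by (rule theI[where P="\<lambda>p. p \<in> K \<and> (\<forall>k\<in>K. ip (v - p) k = 0)", OF ex un])
qed

lemma proj_in: "closed_subspace K \<Longrightarrow> proj K v \<in> K" using proj_char by blast
lemma proj_orth: "closed_subspace K \<Longrightarrow> k \<in> K \<Longrightarrow> ip (v - proj K v) k = 0" using proj_char by blast
lemma proj_ip_left: "closed_subspace K \<Longrightarrow> k \<in> K \<Longrightarrow> ip (proj K v) k = ip v k"
  using proj_orth[of K k v] by (simp add: ip_simps)
lemma proj_ip_right: "closed_subspace K \<Longrightarrow> k \<in> K \<Longrightarrow> ip k (proj K v) = ip k v"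
  using proj_ip_left[of K k v] ip_swap[of k "proj K v"] ip_swap[of k v] by simp

lemma proj_eqI:
  assumes K: "closed_subspace K" and p: "p \<in> K" and e: "\<And>k. k \<in> K \<Longrightarrow> ip v k = ip p k"
  shows "proj K v = p"
proof -
  have "\<forall>k\<in>K. ip (v - p) k = 0" using e by (simp add: ip_diff_left)
  moreover have "proj K v \<in> K" "\<forall>k\<in>K. ip (v - proj K v) k = 0" using proj_char[OF K, of v] by auto
  ultimately show ?thesis using proj_unique[OF K, of "proj K v" v p] p by blast
qed

lemma proj_id: "closed_subspace K \<Longrightarrow> v \<in> K \<Longrightarrow> proj K v = v"
  by (rule proj_eqI) simp_all

lemma proj_add: "closed_subspace K \<Longrightarrow> proj K (x + y) = proj K x + proj K y"
  by (rule proj_eqI) (auto simp: ip_simps proj_ip_left proj_in subspace_add closed_subspace_imp_subspace)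

lemma proj_sc: "closed_subspace K \<Longrightarrow> proj K (sc c x) = sc c (proj K x)"
  by (rule proj_eqI) (auto simp: ip_simps proj_ip_left proj_in subspace_sc closed_subspace_imp_subspace)

lemma proj_self_adjoint: "closed_subspace K \<Longrightarrow> ip (proj K x) y = ip x (proj K y)"
proof -
  assume K: "closed_subspace K"
  have "ip (proj K x) y = ip (proj K x) (proj K y)"
    using proj_ip_right[OF K proj_in[OF K], of x y] by simp
  also have "\<dots> = ip x (proj K y)" using proj_ip_left[OF K proj_in[OF K]] by simp
  finally show ?thesis .
qed

lemma proj_nm_le: assumes K: "closed_subspace K" shows "nm (proj K x) \<le> nm x"
proof -
  have "ip x x = ip (proj K x) (proj K x) + ip (x - proj K x) (x - proj K x)"
  proof -
    have "ip (x - proj K x) (proj K x) = 0" using proj_orth[OF K proj_in[OF K]] .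
    moreover have "ip (proj K x) (x - proj K x) = 0"
      using ip_swap[of "x - proj K x" "proj K x"] calculation by simp
    ultimately show ?thesis by (simp add: ip_simps algebra_simps)
  qed
  then have "(nm x)^2 = (nm (proj K x))^2 + (nm (x - proj K x))^2" using nm_sq by simp
  then have "(nm (proj K x))^2 \<le> (nm x)^2" by simp
  thus ?thesis using power2_le_imp_le by simp
qed

lemma proj_eq_0I: "closed_subspace K \<Longrightarrow> (\<And>k. k \<in> K \<Longrightarrow> ip v k = 0) \<Longrightarrow> proj K v = 0"
  by (rule proj_eqI) (auto simp: closed_subspace_imp_subspace subspace_zero)

lemma bop_in: "bop H K T \<Longrightarrow> x \<in> K \<Longrightarrow> T x \<in> K" unfolding bop_def by blast
lemma bop_out: "bop H K T \<Longrightarrow> x \<notin> K \<Longrightarrow> T x = 0" unfolding bop_def by blast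
lemma bop_add: "bop H K T \<Longrightarrow> x \<in> K \<Longrightarrow> y \<in> K \<Longrightarrow> T (x + y) = T x + T y" unfolding bop_def by blast
lemma bop_sc: "bop H K T \<Longrightarrow> x \<in> K \<Longrightarrow> T (sc c x) = sc c (T x)" unfolding bop_def by blast
lemma bop_bound: assumes "bop H K T" obtains C where "C > 0" "\<And>x. x \<in> K \<Longrightarrow> nm (T x) \<le> C * nm x"
proof -
  obtain C where C: "\<forall>x\<in>K. nm (T x) \<le> C * nm x" using assms unfolding bop_def by blast
  have "nm (T x) \<le> (max C 1) * nm x" if x: "x \<in> K" for x
  proof -
    have "nm (T x) \<le> C * nm x" using C x by blast
    also have "C * nm x \<le> max C 1 * nm x" by (rule mult_right_mono) simp_all
    finally show ?thesis .
  qed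
  thus ?thesis using that[of "max C 1"] by simp
qed

lemma bop_diff: "subspace K \<Longrightarrow> bop H K T \<Longrightarrow> x \<in> K \<Longrightarrow> y \<in> K \<Longrightarrow> T (x - y) = T x - T y"
  using bop_add[of K T "x - y" y] subspace_diff[of K x y] by (simp add: eq_diff_eq)

lemma bop_zero: "subspace K \<Longrightarrow> bop H K T \<Longrightarrow> T 0 = 0"
  using bop_diff[of K T 0 0] subspace_zero by simp

lemma bop_hconv:
  assumes K: "subspace K" and T: "bop H K T" and X: "\<And>n. X n \<in> K" and x: "x \<in> K" and c: "hconv H X x"
  shows "hconv H (\<lambda>n. T (X n)) (T x)"
proof -
  obtain C where C: "C > 0" "\<And>x. x \<in> K \<Longrightarrow> nm (T x) \<le> C * nm x" using bop_bound[OF T] by blast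
  show ?thesis
  proof (rule hconv_by_bound)
    show "nm (T (X n) - T x) \<le> C * nm (X n - x)" for n
      using bop_diff[OF K T X x] C(2)[OF subspace_diff[OF K X x]] by simp
    show "(\<lambda>n. C * nm (X n - x)) \<longlonglongrightarrow> 0"
      using c unfolding hconv_iff by (simp add: tendsto_mult_right_zero)
  qed
qed

lemma bop_comp: assumes "subspace K" "bop H K S" "bop H K T" shows "bop H K (S \<circ> T)"
proof -
  obtain C where C: "C > 0" "\<And>x. x \<in> K \<Longrightarrow> nm (S x) \<le> C * nm x" using bop_bound[OF assms(2)] by blast
  obtain D where D: "D > 0" "\<And>x. x \<in> K \<Longrightarrow> nm (T x) \<le> D * nm x" using bop_bound[OF assms(3)] by blast
  have "\<forall>x\<in>K. nm (S (T x)) \<le> (C * D) * nm x"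
  proof
    fix x assume x: "x \<in> K"
    have "nm (S (T x)) \<le> C * nm (T x)" using C(2) bop_in[OF assms(3) x] by blast
    also have "\<dots> \<le> C * (D * nm x)" using D(2)[OF x] C(1) by simp
    finally show "nm (S (T x)) \<le> (C * D) * nm x" by simp
  qed
  moreover have "\<forall>x. x \<notin> K \<longrightarrow> S (T x) = 0"
    using bop_out[OF assms(3)] bop_zero[OF assms(1,2)] by simp
  moreover have "\<forall>x\<in>K. S (T x) \<in> K" using bop_in assms(2,3) by blast
  moreover have "\<forall>x\<in>K. \<forall>y\<in>K. S (T (x + y)) = S (T x) + S (T y)"
    using bop_add[OF assms(3)] bop_add[OF assms(2)] bop_in[OF assms(3)] by simp
  moreover have "\<forall>c. \<forall>x\<in>K. S (T (sc c x)) = sc c (S (T x))"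
    using bop_sc[OF assms(3)] bop_sc[OF assms(2)] bop_in[OF assms(3)] by simp
  ultimately show ?thesis unfolding bop_def comp_def by blast
qed

lemma bop_plus: assumes "subspace K" "bop H K S" "bop H K T" shows "bop H K (\<lambda>v. S v + T v)"
proof -
  obtain C where C: "C > 0" "\<And>x. x \<in> K \<Longrightarrow> nm (S x) \<le> C * nm x" using bop_bound[OF assms(2)] by blast
  obtain D where D: "D > 0" "\<And>x. x \<in> K \<Longrightarrow> nm (T x) \<le> D * nm x" using bop_bound[OF assms(3)] by blast
  have "\<forall>x\<in>K. nm (S x + T x) \<le> (C + D) * nm x"
  proof
    fix x assume x: "x \<in> K"
    have "nm (S x + T x) \<le> nm (S x) + nm (T x)" by (rule nm_triangle)
    also have "\<dots> \<le> (C + D) * nm x" using C(2)[OF x] D(2)[OF x] by (simp add: distrib_right)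
    finally show "nm (S x + T x) \<le> (C + D) * nm x" .
  qed
  moreover have "\<forall>x\<in>K. \<forall>y\<in>K. S (x + y) + T (x + y) = (S x + T x) + (S y + T y)"
    using assms bop_add by (simp add: algebra_simps)
  moreover have "\<forall>c. \<forall>x\<in>K. S (sc c x) + T (sc c x) = sc c (S x + T x)"
    using assms bop_sc by (simp add: sc_add)
  ultimately show ?thesis using assms unfolding bop_def
    by (auto intro: subspace_add)
qed

lemma bop_scal: assumes "subspace K" "bop H K T" shows "bop H K (\<lambda>v. sc c (T v))"
proof -
  obtain C where C: "C > 0" "\<And>x. x \<in> K \<Longrightarrow> nm (T x) \<le> C * nm x" using bop_bound[OF assms(2)] by blast
  have "\<forall>x\<in>K. nm (sc c (T x)) \<le> (cmod c * C) * nm x"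
    using C by (simp add: nm_sc mult.assoc mult_left_mono)
  moreover have "\<forall>d. \<forall>x\<in>K. sc c (T (sc d x)) = sc d (sc c (T x))"
  proof (intro allI ballI)
    fix d x assume "x \<in> K"
    then have "T (sc d x) = sc d (T x)" using bop_sc[OF assms(2)] by blast
    then show "sc c (T (sc d x)) = sc d (sc c (T x))"
      using sc_mult[of c d "T x"] sc_mult[of d c "T x"] by (simp add: mult.commute)
  qed
  ultimately show ?thesis using assms unfolding bop_def
    by (auto intro: subspace_sc simp: sc_add)
qed

lemma eq_on_hcl_scalar:
  assumes "\<And>X x. (\<And>n. X n \<in> D) \<Longrightarrow> hconv H X x \<Longrightarrow> (\<lambda>n. f (X n)) \<longlonglongrightarrow> f x"
    and "\<And>X x. (\<And>n. X n \<in> D) \<Longrightarrow> hconv H X x \<Longrightarrow> (\<lambda>n. g (X n)) \<longlonglongrightarrow> g x"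
    and "\<And>d. d \<in> D \<Longrightarrow> f d = g d" and "x \<in> hcl H D"
  shows "f x = (g x :: 'b::t2_space)"
proof -
  obtain X where X: "\<And>n. X n \<in> D" "hconv H X x" using assms(4) unfolding hcl_def by blast
  have "(\<lambda>n. f (X n)) \<longlonglongrightarrow> f x" using assms(1)[OF X] .
  moreover have "(\<lambda>n. f (X n)) \<longlonglongrightarrow> g x" using assms(2)[OF X] assms(3)[OF X(1)] by simp
  ultimately show ?thesis using LIMSEQ_unique by blast
qed

lemma eq_on_hcl:
  assumes "\<And>X x. (\<And>n. X n \<in> D) \<Longrightarrow> hconv H X x \<Longrightarrow> hconv H (\<lambda>n. f (X n)) (f x)"
    and "\<And>X x. (\<And>n. X n \<in> D) \<Longrightarrow> hconv H X x \<Longrightarrow> hconv H (\<lambda>n. g (X n)) (g x)"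
    and "\<And>d. d \<in> D \<Longrightarrow> f d = g d" and "x \<in> hcl H D"
  shows "f x = g x"
proof -
  obtain X where X: "\<And>n. X n \<in> D" "hconv H X x" using assms(4) unfolding hcl_def by blast
  have "hconv H (\<lambda>n. f (X n)) (f x)" using assms(1)[OF X] .
  moreover have "hconv H (\<lambda>n. f (X n)) (g x)" using assms(2)[OF X] assms(3)[OF X(1)] by simp
  ultimately show ?thesis using hconv_unique by blast
qed

lemma bop_hconv_hcl:
  assumes D: "subspace D" and T: "bop H (hcl H D) T" and X: "\<And>n. X n \<in> D" and c: "hconv H X x"
  shows "hconv H (\<lambda>n. T (X n)) (T x)"
proof -
  have x: "x \<in> hcl H D" using hclI[OF X c] .
  show ?thesis
    using bop_hconv[OF closed_subspace_imp_subspace[OF closed_subspace_hcl[OF D]] T _ x c] X hcl_superset by blast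
qed

lemma bop_eq_on_dense:
  assumes D: "subspace D" and T: "bop H (hcl H D) T" and S: "bop H (hcl H D) S"
    and e: "\<And>d. d \<in> D \<Longrightarrow> T d = S d"
  shows "T = S"
proof
  fix x
  show "T x = S x"
  proof (cases "x \<in> hcl H D")
    case True
    show ?thesis
      by (rule eq_on_hcl[OF _ _ e True]) (use bop_hconv_hcl[OF D T] bop_hconv_hcl[OF D S] in blast)+
  next
    case False
    then show ?thesis using bop_out[OF T] bop_out[OF S] by simp
  qed
qed

lemma orth_dense_eq_0:
  assumes v: "v \<in> hcl H D" and o: "\<And>d. d \<in> D \<Longrightarrow> ip v d = 0"
  shows "v = 0"
proof -
  have "ip v v = (\<lambda>_. 0) v"
    by (rule eq_on_hcl_scalar[OF _ _ o v]) (auto intro: hconv_ip hconv_const)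
  then show ?thesis using ip_self_eq_0D by simp
qed

lemma eq_by_ip_dense:
  assumes D: "subspace D" and "v \<in> hcl H D" "w \<in> hcl H D" and o: "\<And>d. d \<in> D \<Longrightarrow> ip v d = ip w d"
  shows "v = w"
proof -
  have "v - w \<in> hcl H D"
    using assms closed_subspace_hcl[OF D] closed_subspace_imp_subspace subspace_diff by blast
  moreover have "\<And>d. d \<in> D \<Longrightarrow> ip (v - w) d = 0" using o by (simp add: ip_diff_left)
  ultimately have "v - w = 0" using orth_dense_eq_0 by blast
  then show ?thesis by simp
qed

subsection \<open>Riesz representation and adjoints\<close>

lemma kernel_closed_subspace:
  assumes K: "closed_subspace K"
    and add: "\<And>x y. x \<in> K \<Longrightarrow> y \<in> K \<Longrightarrow> f (x + y) = f x + f y"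
    and hom: "\<And>c x. x \<in> K \<Longrightarrow> f (sc c x) = c * f x"
    and bnd: "\<And>x. x \<in> K \<Longrightarrow> cmod (f x) \<le> C * nm x"
  shows "closed_subspace {x\<in>K. f x = 0}"
  unfolding closed_subspace_def subspace_def
proof (intro conjI ballI allI subsetI)
  have S: "subspace K" using K closed_subspace_imp_subspace by blast
  show "0 \<in> {x\<in>K. f x = 0}" using hom[of 0 0] subspace_zero[OF S] by simp
  show "x + y \<in> {x\<in>K. f x = 0}" if "x \<in> {x\<in>K. f x = 0}" "y \<in> {x\<in>K. f x = 0}" for x y
    using that add subspace_add[OF S] by auto
  show "sc c x \<in> {x\<in>K. f x = 0}" if "x \<in> {x\<in>K. f x = 0}" for c x
    using that hom subspace_sc[OF S] by auto
  show "x \<in> {x\<in>K. f x = 0}" if hx: "x \<in> hcl H {x\<in>K. f x = 0}" for x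
  proof -
    obtain X where X: "\<And>n. X n \<in> K" "\<And>n. f (X n) = 0" "hconv H X x"
      using hx unfolding hcl_def by blast
    have xK: "x \<in> K" using closed_subspace_hconv[OF K X(1,3)] .
    have "f (x - X n) = f x" for n
      using add[OF subspace_diff[OF S xK X(1)] X(1), of n n] X(2)[of n] by simp
    then have "cmod (f x) \<le> C * nm (x - X n)" for n
      using bnd[OF subspace_diff[OF S xK X(1)]] by metis
    moreover have "(\<lambda>n. C * nm (x - X n)) \<longlonglongrightarrow> 0"
      using X(3) unfolding hconv_iff by (simp add: nm_diff_commute tendsto_mult_right_zero)
    ultimately have "cmod (f x) \<le> 0"
      using LIMSEQ_le_const[of "\<lambda>n. C * nm (x - X n)" 0 "cmod (f x)"] by auto
    then show ?thesis using xK by simp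
  qed
qed

text \<open>The representing vector is a multiple of any nonzero vector orthogonal to the kernel.\<close>
lemma riesz_representation:
  assumes K: "closed_subspace K"
    and add: "\<And>x y. x \<in> K \<Longrightarrow> y \<in> K \<Longrightarrow> f (x + y) = f x + f y"
    and hom: "\<And>c x. x \<in> K \<Longrightarrow> f (sc c x) = c * f x"
    and bnd: "\<And>x. x \<in> K \<Longrightarrow> cmod (f x) \<le> C * nm x"
  shows "\<exists>z\<in>K. \<forall>x\<in>K. f x = ip x z"
proof (cases "\<forall>x\<in>K. f x = 0")
  case True
  then show ?thesis using subspace_zero[OF closed_subspace_imp_subspace[OF K]] by (intro bexI[of _ 0]) auto
next
  case False
  have S: "subspace K" using K closed_subspace_imp_subspace by blast
  then obtain w where w: "w \<in> K" "f w \<noteq> 0" using False by blast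
  have fdiff: "f (x - y) = f x - f y" if "x \<in> K" "y \<in> K" for x y
    using add[of "x - y" y] subspace_diff[OF S that] that by simp
  define N where "N = {x\<in>K. f x = 0}"
  have N: "closed_subspace N" unfolding N_def using kernel_closed_subspace[OF K add hom bnd] .
  define w0 where "w0 = w - proj N w"
  have pN: "proj N w \<in> N" using proj_in[OF N] .
  have w0K: "w0 \<in> K" unfolding w0_def using pN w(1) subspace_diff[OF S] unfolding N_def by blast
  have fw0: "f w0 = f w" unfolding w0_def using fdiff[OF w(1)] pN unfolding N_def by simp
  have orth: "\<And>u. u \<in> N \<Longrightarrow> ip u w0 = 0"
    using proj_orth[OF N] ip_swap unfolding w0_def by (metis complex_cnj_zero)
  have "f 0 = 0" using hom[of 0 0] subspace_zero[OF S] by simp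
  then have ipw0: "ip w0 w0 \<noteq> 0" using fw0 w(2) ip_self_eq_0D by metis
  define z where "z = sc (cnj (f w0 / ip w0 w0)) w0"
  have "f x = ip x z" if x: "x \<in> K" for x
  proof -
    define u where "u = x - sc (f x / f w0) w0"
    have uK: "u \<in> K" unfolding u_def using x w0K S subspace_diff subspace_sc by blast
    have "f u = f x - (f x / f w0) * f w0" unfolding u_def
      using fdiff[OF x subspace_sc[OF S w0K]] hom[OF w0K] by simp
    also have "\<dots> = 0" using fw0 w(2) by simp
    finally have "u \<in> N" unfolding N_def using uK by simp
    then have "ip u w0 = 0" by (rule orth)
    then have "ip x w0 = (f x / f w0) * ip w0 w0" unfolding u_def by (simp add: ip_simps)
    then have "f x = ip x w0 * f w0 / ip w0 w0" using ipw0 fw0 w(2) by (simp add: field_simps)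
    also have "\<dots> = ip x z" unfolding z_def by (simp add: ip_sc_right)
    finally show "f x = ip x z" .
  qed
  moreover have "z \<in> K" unfolding z_def using subspace_sc[OF S w0K] .
  ultimately show ?thesis by blast
qed

lemma eq_by_ip_closed_subspace:
  assumes K: "closed_subspace K" and "z \<in> K" "z' \<in> K" and "\<And>x. x \<in> K \<Longrightarrow> ip x z = ip x z'"
  shows "z = z'"
proof -
  have d: "z - z' \<in> K" using assms subspace_diff closed_subspace_imp_subspace by blast
  have "ip (z - z') (z - z') = 0"
    using assms(4)[OF d] by (simp add: ip_diff_right)
  thus ?thesis using ip_self_eq_0D[of "z - z'"] by simp
qed

lemma adjoint_vector_bound:
  assumes T: "nm (T s) \<le> C * nm s" and C: "C > 0" and s: "ip (T s) y = ip s s"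
  shows "nm s \<le> C * nm y"
proof -
  have "(nm s)^2 = Re (ip (T s) y)" using s nm_sq by simp
  also have "\<dots> \<le> cmod (ip (T s) y)" by (rule complex_Re_le_cmod)
  also have "\<dots> \<le> nm (T s) * nm y" by (rule cauchy_schwarz)
  also have "\<dots> \<le> (C * nm s) * nm y" using T by (simp add: mult_right_mono)
  finally have "nm s * nm s \<le> (C * nm y) * nm s"
    by (simp add: power2_eq_square algebra_simps)
  then show ?thesis
    using C by (cases "nm s = 0") (auto simp: less_le intro: mult_right_le_imp_le)
qed

lemma adjoint_map_bop:
  assumes K: "closed_subspace K" and T: "bop H K T"
    and S_in: "\<And>y. y \<in> K \<Longrightarrow> S y \<in> K" and S_out: "\<And>y. y \<notin> K \<Longrightarrow> S y = 0"
    and S_adj: "\<And>x y. x \<in> K \<Longrightarrow> y \<in> K \<Longrightarrow> ip (T x) y = ip x (S y)"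
  shows "bop H K S"
  unfolding bop_def
proof (intro conjI ballI allI impI)
  have S0: "subspace K" using K closed_subspace_imp_subspace by blast
  show "S x \<in> K" if "x \<in> K" for x using S_in[OF that] .
  show "S x = 0" if "x \<notin> K" for x using S_out[OF that] .
  show "S (x + y) = S x + S y" if xy: "x \<in> K" "y \<in> K" for x y
  proof (rule eq_by_ip_closed_subspace[OF K])
    show "S (x + y) \<in> K" "S x + S y \<in> K" using S_in subspace_add[OF S0] xy by blast+
    show "ip u (S (x + y)) = ip u (S x + S y)" if u: "u \<in> K" for u
      using S_adj[OF u subspace_add[OF S0 xy]] S_adj[OF u xy(1)] S_adj[OF u xy(2)]
      by (simp add: ip_add_right)
  qed
  show "S (sc c x) = sc c (S x)" if x: "x \<in> K" for c x
  proof (rule eq_by_ip_closed_subspace[OF K])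
    show "S (sc c x) \<in> K" "sc c (S x) \<in> K" using S_in subspace_sc[OF S0] x by blast+
    show "ip u (S (sc c x)) = ip u (sc c (S x))" if u: "u \<in> K" for u
      using S_adj[OF u subspace_sc[OF S0 x]] S_adj[OF u x] by (simp add: ip_sc_right)
  qed
  obtain C where C: "C > 0" "\<And>x. x \<in> K \<Longrightarrow> nm (T x) \<le> C * nm x" using bop_bound[OF T] by blast
  show "\<exists>C. \<forall>y\<in>K. nm (S y) \<le> C * nm y"
  proof (intro exI ballI)
    fix y assume y: "y \<in> K"
    show "nm (S y) \<le> C * nm y"
      using adjoint_vector_bound[where T=T, OF C(2)[OF S_in[OF y]] C(1) S_adj[OF S_in[OF y] y]] .
  qed
qed

lemma adj_exists:
  assumes K: "closed_subspace K" and T: "bop H K T"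
  shows "\<exists>S. bop H K S \<and> (\<forall>x\<in>K. \<forall>y\<in>K. ip (T x) y = ip x (S y))"
proof -
  obtain C where C: "C > 0" "\<And>x. x \<in> K \<Longrightarrow> nm (T x) \<le> C * nm x" using bop_bound[OF T] by blast
  have "\<exists>z\<in>K. \<forall>x\<in>K. ip (T x) y = ip x z" if y: "y \<in> K" for y
  proof (rule riesz_representation[OF K])
    show "ip (T (x + x')) y = ip (T x) y + ip (T x') y" if "x \<in> K" "x' \<in> K" for x x'
      using bop_add[OF T that] by (simp add: ip_add_left)
    show "ip (T (sc c x)) y = c * ip (T x) y" if "x \<in> K" for c x
      using bop_sc[OF T that] by (simp add: ip_sc_left)
    show "cmod (ip (T x) y) \<le> (C * nm y) * nm x" if "x \<in> K" for x
    proof -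
      have "cmod (ip (T x) y) \<le> nm (T x) * nm y" by (rule cauchy_schwarz)
      also have "\<dots> \<le> (C * nm x) * nm y" using C(2)[OF that] by (simp add: mult_right_mono)
      finally show ?thesis by (simp add: algebra_simps)
    qed
  qed
  then obtain S0 where S0: "\<And>y. y \<in> K \<Longrightarrow> S0 y \<in> K \<and> (\<forall>x\<in>K. ip (T x) y = ip x (S0 y))"
    by metis
  define S where "S y = (if y \<in> K then S0 y else 0)" for y
  have "bop H K S"
    by (rule adjoint_map_bop[OF K T]) (auto simp: S_def S0)
  then show ?thesis using S0 unfolding S_def by auto
qed

lemma adj_unique:
  assumes K: "closed_subspace K"
    and S1: "bop H K S1" "\<forall>x\<in>K. \<forall>y\<in>K. ip (T x) y = ip x (S1 y)"
    and S2: "bop H K S2" "\<forall>x\<in>K. \<forall>y\<in>K. ip (T x) y = ip x (S2 y)"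
  shows "S1 = S2"
proof
  fix y show "S1 y = S2 y"
  proof (cases "y \<in> K")
    case True
    show ?thesis by (rule eq_by_ip_closed_subspace[OF K]) (use S1 S2 True bop_in in auto)
  next
    case False then show ?thesis using bop_out S1 S2 by metis
  qed
qed

lemma adj_char:
  assumes K: "closed_subspace K" and T: "bop H K T"
  shows "bop H K (adj H K T) \<and> (\<forall>x\<in>K. \<forall>y\<in>K. ip (T x) y = ip x (adj H K T y))"
proof -
  obtain S where S: "bop H K S \<and> (\<forall>x\<in>K. \<forall>y\<in>K. ip (T x) y = ip x (S y))"
    using adj_exists[OF K T] by blast
  show ?thesis unfolding adj_def
    by (rule theI[where P="\<lambda>S. bop H K S \<and> (\<forall>x\<in>K. \<forall>y\<in>K. ip (T x) y = ip x (S y))", OF S])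
       (use adj_unique[OF K] S in blast)
qed

lemma adj_bop: "closed_subspace K \<Longrightarrow> bop H K T \<Longrightarrow> bop H K (adj H K T)" using adj_char by blast
lemma adj_ip: "closed_subspace K \<Longrightarrow> bop H K T \<Longrightarrow> x \<in> K \<Longrightarrow> y \<in> K \<Longrightarrow> ip (T x) y = ip x (adj H K T y)"
  using adj_char by blast
lemma adj_ip2: "closed_subspace K \<Longrightarrow> bop H K T \<Longrightarrow> x \<in> K \<Longrightarrow> y \<in> K \<Longrightarrow> ip (adj H K T x) y = ip x (T y)"
  using adj_ip[of K T y x] ip_swap by metis

end

locale dense_extension = hilbert_space H for H :: "('h::ab_group_add) hsp" +
  fixes D :: "'h set" and f :: "'h \<Rightarrow> 'h" and \<sigma> :: "complex \<Rightarrow> complex" and C :: real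
  assumes subspace_D: "subspace D"
    and f_add: "x \<in> D \<Longrightarrow> y \<in> D \<Longrightarrow> f (x + y) = f x + f y"
    and f_sc: "x \<in> D \<Longrightarrow> f (sc c x) = sc (\<sigma> c) (f x)"
    and f_bound: "x \<in> D \<Longrightarrow> nm (f x) \<le> C * nm x"
begin

definition cont_ext :: "'h \<Rightarrow> 'h" where
  "cont_ext x = (if x \<in> hcl H D
     then THE l. \<exists>X. (\<forall>n. X n \<in> D) \<and> hconv H X x \<and> hconv H (\<lambda>n. f (X n)) l else 0)"

lemma f_dist_bound:
  assumes "x \<in> D" "y \<in> D"
  shows "nm (f x - f y) \<le> (\<bar>C\<bar> + 1) * nm (x - y)"
proof -
  have "f x - f y = f (x - y)"
    using f_add[OF subspace_diff[OF subspace_D assms] assms(2)] by simp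
  also have "nm \<dots> \<le> C * nm (x - y)" using f_bound[OF subspace_diff[OF subspace_D assms]] .
  also have "\<dots> \<le> (\<bar>C\<bar> + 1) * nm (x - y)" by (rule mult_right_mono) simp_all
  finally show ?thesis .
qed

lemma f_seq_hconv:
  assumes X: "\<And>n. X n \<in> D" "hconv H X x"
  shows "\<exists>l. hconv H (\<lambda>n. f (X n)) l"
proof -
  have "hcauchy H (\<lambda>n. f (X n))"
    unfolding hcauchy_def
  proof (intro allI impI)
    fix e :: real assume "e > 0"
    then have "e / (\<bar>C\<bar> + 1) > 0" by simp
    then obtain N where N: "\<forall>m\<ge>N. \<forall>n\<ge>N. nm (X m - X n) < e / (\<bar>C\<bar> + 1)"
      using hconv_cauchy[OF X(2)] unfolding hcauchy_def by blast
    have "nm (f (X m) - f (X n)) < e" if "m \<ge> N" "n \<ge> N" for m n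
    proof -
      have "nm (f (X m) - f (X n)) \<le> (\<bar>C\<bar> + 1) * nm (X m - X n)"
        using f_dist_bound[OF X(1) X(1)] .
      also have "\<dots> < (\<bar>C\<bar> + 1) * (e / (\<bar>C\<bar> + 1))"
        using N that by (intro mult_strict_left_mono) auto
      finally show ?thesis by simp
    qed
    then show "\<exists>N. \<forall>m\<ge>N. \<forall>n\<ge>N. nm (f (X m) - f (X n)) < e" by blast
  qed
  then show ?thesis using hcauchy_hconv by blast
qed

lemma f_seq_limit_unique:
  assumes X: "\<And>n. X n \<in> D" "hconv H X x" and Y: "\<And>n. Y n \<in> D" "hconv H Y x"
    and l: "hconv H (\<lambda>n. f (X n)) l" and l': "hconv H (\<lambda>n. f (Y n)) l'"
  shows "l = l'"
proof -
  have "hconv H (\<lambda>n. f (X n) - f (Y n)) 0"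
  proof (rule hconv_by_bound)
    show "nm (f (X n) - f (Y n) - 0) \<le> (\<bar>C\<bar> + 1) * nm (X n - Y n)" for n
      using f_dist_bound[OF X(1) Y(1)] by simp
    have "hconv H (\<lambda>n. X n - Y n) (x - x)" by (rule hconv_diff[OF X(2) Y(2)])
    then show "(\<lambda>n. (\<bar>C\<bar> + 1) * nm (X n - Y n)) \<longlonglongrightarrow> 0"
      unfolding hconv_iff by (simp add: tendsto_mult_right_zero)
  qed
  moreover have "hconv H (\<lambda>n. f (X n) - f (Y n)) (l - l')" by (rule hconv_diff[OF l l'])
  ultimately show ?thesis using hconv_unique by fastforce
qed

lemma cont_ext_hconv:
  assumes X: "\<And>n. X n \<in> D" "hconv H X x"
  shows "hconv H (\<lambda>n. f (X n)) (cont_ext x)"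
proof -
  obtain l where l: "hconv H (\<lambda>n. f (X n)) l" using f_seq_hconv[OF X] by blast
  have "cont_ext x = l"
    unfolding cont_ext_def if_P[OF hclI[OF X]]
  proof (rule the_equality)
    show "\<exists>X'. (\<forall>n. X' n \<in> D) \<and> hconv H X' x \<and> hconv H (\<lambda>n. f (X' n)) l" using X l by blast
    show "l' = l" if "\<exists>X'. (\<forall>n. X' n \<in> D) \<and> hconv H X' x \<and> hconv H (\<lambda>n. f (X' n)) l'" for l'
      using that f_seq_limit_unique[OF _ _ X _ l] by blast
  qed
  then show ?thesis using l by simp
qed

lemma cont_ext_eq: "x \<in> D \<Longrightarrow> cont_ext x = f x"
  using cont_ext_hconv[of "\<lambda>n. x" x] hconv_const hconv_unique by blast

lemma cont_ext_outside: "x \<notin> hcl H D \<Longrightarrow> cont_ext x = 0"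
  unfolding cont_ext_def by simp

lemma cont_ext_add:
  assumes "x \<in> hcl H D" "y \<in> hcl H D"
  shows "cont_ext (x + y) = cont_ext x + cont_ext y"
proof -
  obtain X where X: "\<And>n. X n \<in> D" "hconv H X x" using assms(1) unfolding hcl_def by blast
  obtain Y where Y: "\<And>n. Y n \<in> D" "hconv H Y y" using assms(2) unfolding hcl_def by blast
  have "hconv H (\<lambda>n. f (X n + Y n)) (cont_ext (x + y))"
    using cont_ext_hconv[OF _ hconv_add[OF X(2) Y(2)]] subspace_add[OF subspace_D X(1) Y(1)] .
  moreover have "hconv H (\<lambda>n. f (X n + Y n)) (cont_ext x + cont_ext y)"
    using hconv_add[OF cont_ext_hconv[OF X] cont_ext_hconv[OF Y]] X(1) Y(1) f_add by simp
  ultimately show ?thesis using hconv_unique by blast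
qed

lemma cont_ext_sc:
  assumes "x \<in> hcl H D"
  shows "cont_ext (sc c x) = sc (\<sigma> c) (cont_ext x)"
proof -
  obtain X where X: "\<And>n. X n \<in> D" "hconv H X x" using assms unfolding hcl_def by blast
  have "hconv H (\<lambda>n. f (sc c (X n))) (cont_ext (sc c x))"
    using cont_ext_hconv[OF _ hconv_sc[OF X(2)]] subspace_sc[OF subspace_D X(1)] .
  moreover have "hconv H (\<lambda>n. f (sc c (X n))) (sc (\<sigma> c) (cont_ext x))"
    using hconv_sc[OF cont_ext_hconv[OF X]] X(1) f_sc by simp
  ultimately show ?thesis using hconv_unique by blast
qed

lemma cont_ext_bound:
  assumes "x \<in> hcl H D"
  shows "nm (cont_ext x) \<le> C * nm x"
proof -
  obtain X where X: "\<And>n. X n \<in> D" "hconv H X x" using assms unfolding hcl_def by blast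
  have "(\<lambda>n. nm (f (X n))) \<longlonglongrightarrow> nm (cont_ext x)" using hconv_nm[OF cont_ext_hconv[OF X]] .
  moreover have "(\<lambda>n. C * nm (X n)) \<longlonglongrightarrow> C * nm x" using hconv_nm[OF X(2)] by (intro tendsto_intros)
  ultimately show ?thesis using LIMSEQ_le f_bound X(1) by blast
qed

lemma cont_ext_in:
  assumes K: "hcl H K \<subseteq> K" and f_in: "\<And>x. x \<in> D \<Longrightarrow> f x \<in> K" and x: "x \<in> hcl H D"
  shows "cont_ext x \<in> K"
proof -
  obtain X where X: "\<And>n. X n \<in> D" "hconv H X x" using x unfolding hcl_def by blast
  then have "cont_ext x \<in> hcl H K" using hclI[OF f_in cont_ext_hconv[OF X]] by blast
  then show ?thesis using K by blast
qed

end

context hilbert_space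
begin

lemma bop_extension:
  assumes D: "subspace D"
    and add: "\<And>x y. x \<in> D \<Longrightarrow> y \<in> D \<Longrightarrow> f (x + y) = f x + f y"
    and hom: "\<And>c x. x \<in> D \<Longrightarrow> f (sc c x) = sc c (f x)"
    and bnd: "\<And>x. x \<in> D \<Longrightarrow> nm (f x) \<le> C * nm x"
    and rng: "\<And>x. x \<in> D \<Longrightarrow> f x \<in> hcl H D"
  shows "\<exists>T. bop H (hcl H D) T \<and> (\<forall>x\<in>D. T x = f x)"
proof -
  interpret dense_extension H D f "\<lambda>c. c" C
    by unfold_locales (use assms in auto)
  have "bop H (hcl H D) cont_ext"
    unfolding bop_def using cont_ext_in[OF hcl_hcl_subset rng] cont_ext_outside cont_ext_add
      cont_ext_sc cont_ext_bound by blast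
  then show ?thesis using cont_ext_eq by blast
qed

lemma bop_proj: assumes K: "closed_subspace K" shows "bop H UNIV (proj K)"
  unfolding bop_def
proof (intro conjI ballI allI impI)
  show "proj K (x + y) = proj K x + proj K y" for x y using proj_add[OF K] .
  show "proj K (sc c x) = sc c (proj K x)" for c x using proj_sc[OF K] .
  show "\<exists>C. \<forall>x\<in>UNIV. nm (proj K x) \<le> C * nm x" using proj_nm_le[OF K] by (intro exI[of _ 1]) simp
qed simp_all

lemma funpow_bop_in: "bop H K S \<Longrightarrow> v \<in> K \<Longrightarrow> (S ^^ n) v \<in> K"
  by (induction n) (auto intro: bop_in)

lemma funpow_bop_bound:
  assumes S: "bop H K S" and C: "C \<ge> 0" "\<And>u. u \<in> K \<Longrightarrow> nm (S u) \<le> C * nm u" and v: "v \<in> K"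
  shows "nm ((S ^^ n) v) \<le> C ^ n * nm v"
proof (induction n)
  case (Suc n)
  have "nm ((S ^^ Suc n) v) \<le> C * nm ((S ^^ n) v)" using C(2)[OF funpow_bop_in[OF S v]] by simp
  also have "\<dots> \<le> C * (C ^ n * nm v)" using Suc C(1) by (rule mult_left_mono)
  finally show ?case by (simp add: mult.assoc)
qed simp

lemma funpow_symmetric:
  assumes S: "bop H K S"
    and sym: "\<And>u w. u \<in> K \<Longrightarrow> w \<in> K \<Longrightarrow> ip (Q (S u)) (Q w) = ip (Q u) (Q (S w))"
    and v: "v \<in> K" and w: "w \<in> K"
  shows "ip (Q ((S ^^ n) v)) (Q w) = ip (Q v) (Q ((S ^^ n) w))"
  using w
proof (induction n arbitrary: w)
  case (Suc n)
  have "ip (Q ((S ^^ Suc n) v)) (Q w) = ip (Q ((S ^^ n) v)) (Q (S w))"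
    using sym[OF funpow_bop_in[OF S v] Suc.prems] by simp
  also have "\<dots> = ip (Q v) (Q ((S ^^ n) (S w)))" using Suc.IH[OF bop_in[OF S Suc.prems]] .
  finally show ?case by (simp add: funpow_Suc_right del: funpow.simps)
qed simp

text \<open>For \<open>S\<close> symmetric with respect to the form \<open>ip (Q u) (Q w)\<close>, Cauchy-Schwarz gives
  \<open>nm (Q ((S ^^ m) u))^2 \<le> nm (Q u) * nm (Q ((S ^^ (2 * m)) u))\<close>; along \<open>m = 2 ^ k\<close>
  the growth of \<open>S ^^ m\<close> is at most exponential, so \<open>squaring_growth_bound\<close> applies.\<close>
lemma power_iteration_bound:
  assumes S: "bop H K S" and Q: "bop H UNIV Q"
    and sym: "\<And>u w. u \<in> K \<Longrightarrow> w \<in> K \<Longrightarrow> ip (Q (S u)) (Q w) = ip (Q u) (Q (S w))"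
    and CS: "CS > 0" "\<And>u. u \<in> K \<Longrightarrow> nm (S u) \<le> CS * nm u"
    and u: "u \<in> K"
  shows "nm (Q (S u)) \<le> CS * nm (Q u)"
proof -
  obtain CQ where CQ: "CQ > 0" "\<And>v. v \<in> UNIV \<Longrightarrow> nm (Q v) \<le> CQ * nm v"
    using bop_bound[OF Q] by metis
  define bb where "bb k = nm (Q ((S ^^ (2 ^ k)) u))" for k
  have "bb 0 \<le> CS * nm (Q u)"
  proof (rule squaring_growth_bound)
    show "0 \<le> bb k" for k unfolding bb_def by simp
    show "0 \<le> nm (Q u)" by simp
    show "0 < CS" by (rule CS(1))
    show "(bb k)^2 \<le> bb (Suc k) * nm (Q u)" for k
    proof -
      define v where "v = (S ^^ (2 ^ k)) u"
      have "(2::nat) ^ Suc k = 2 ^ k + 2 ^ k" by simp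
      then have "(S ^^ (2 ^ k)) v = (S ^^ (2 ^ Suc k)) u"
        unfolding v_def by (simp only: funpow_add comp_apply)
      moreover have "ip (Q v) (Q v) = ip (Q u) (Q ((S ^^ (2 ^ k)) v))"
        unfolding v_def by (rule funpow_symmetric[where Q=Q, OF S sym u funpow_bop_in[OF S u]])
      ultimately have "(bb k)^2 = Re (ip (Q u) (Q ((S ^^ (2 ^ Suc k)) u)))"
        unfolding bb_def v_def[symmetric] by (simp add: nm_sq)
      also have "\<dots> \<le> cmod (ip (Q u) (Q ((S ^^ (2 ^ Suc k)) u)))" by (rule complex_Re_le_cmod)
      also have "\<dots> \<le> nm (Q u) * bb (Suc k)" unfolding bb_def by (rule cauchy_schwarz)
      finally show ?thesis by (simp add: mult.commute)
    qed
    show "bb k \<le> CQ * nm u * CS ^ 2 ^ k" for k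
    proof -
      have "bb k \<le> CQ * nm ((S ^^ (2 ^ k)) u)" unfolding bb_def by (rule CQ(2)) simp
      also have "\<dots> \<le> CQ * (CS ^ (2 ^ k) * nm u)"
        using funpow_bop_bound[OF S _ CS(2) u] CS(1) CQ(1) by (simp add: mult_left_mono)
      finally show ?thesis by (simp add: algebra_simps)
    qed
  qed
  then show ?thesis unfolding bb_def by simp
qed

lemma comm_bop: "T \<in> comm H K S \<Longrightarrow> bop H K T" unfolding comm_def by blast
lemma comm_commute: "T \<in> comm H K S \<Longrightarrow> s \<in> S \<Longrightarrow> x \<in> K \<Longrightarrow> T (s x) = s (T x)"
  unfolding comm_def by blast
lemma commI: "bop H K T \<Longrightarrow> (\<And>s x. s \<in> S \<Longrightarrow> x \<in> K \<Longrightarrow> T (s x) = s (T x)) \<Longrightarrow> T \<in> comm H K S"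
  unfolding comm_def by blast

lemma comm_comp:
  assumes K: "subspace K" and T1: "T1 \<in> comm H K S" and T2: "T2 \<in> comm H K S"
  shows "T1 \<circ> T2 \<in> comm H K S"
proof (rule commI)
  show "bop H K (T1 \<circ> T2)" using bop_comp[OF K comm_bop[OF T1] comm_bop[OF T2]] .
  fix s x assume s: "s \<in> S" and x: "x \<in> K"
  have "T2 x \<in> K" using bop_in[OF comm_bop[OF T2] x] .
  then show "(T1 \<circ> T2) (s x) = s ((T1 \<circ> T2) x)"
    using comm_commute[OF T2 s x] comm_commute[OF T1 s] by simp
qed

lemma comm_add:
  assumes K: "subspace K" and T1: "T1 \<in> comm H K S" and T2: "T2 \<in> comm H K S"
    and Sb: "\<And>s. s \<in> S \<Longrightarrow> bop H K s"
  shows "(\<lambda>v. T1 v + T2 v) \<in> comm H K S"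
proof (rule commI)
  show "bop H K (\<lambda>v. T1 v + T2 v)" using bop_plus[OF K comm_bop[OF T1] comm_bop[OF T2]] .
  fix s x assume s: "s \<in> S" and x: "x \<in> K"
  have "s (T1 x + T2 x) = s (T1 x) + s (T2 x)"
    using bop_add[OF Sb[OF s] bop_in[OF comm_bop[OF T1] x] bop_in[OF comm_bop[OF T2] x]] .
  then show "T1 (s x) + T2 (s x) = s (T1 x + T2 x)"
    using comm_commute[OF T1 s x] comm_commute[OF T2 s x] by simp
qed

lemma comm_sc:
  assumes K: "subspace K" and T: "T \<in> comm H K S"
    and Sb: "\<And>s. s \<in> S \<Longrightarrow> bop H K s"
  shows "(\<lambda>v. sc c (T v)) \<in> comm H K S"
proof (rule commI)
  show "bop H K (\<lambda>v. sc c (T v))" using bop_scal[OF K comm_bop[OF T]] .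
  fix s x assume s: "s \<in> S" and x: "x \<in> K"
  show "sc c (T (s x)) = s (sc c (T x))"
    using comm_commute[OF T s x] bop_sc[OF Sb[OF s] bop_in[OF comm_bop[OF T] x]] by simp
qed

lemma comm_comm_superset: "bop H K s \<Longrightarrow> s \<in> S \<Longrightarrow> s \<in> comm H K (comm H K S)"
  by (rule commI) (auto dest: comm_commute)

end

section \<open>The standard representation of a finite pre-von Neumann algebra\<close>

locale tracial_gns = hilbert_space H for H :: "('h::ab_group_add) hsp" +
  fixes P :: "('a::ring_1) pvn" and G :: "'a \<Rightarrow> 'h"
  assumes fin: "fin_pvn P" and emb: "emb P H G" and dense: "hcl H (range G) = UNIV"
begin

abbreviation as where "as \<equiv> asc P"
abbreviation st where "st \<equiv> ast P"
abbreviation tr where "tr \<equiv> atr P"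

lemma star_alg_P: "star_alg P"
  using fin unfolding fin_pvn_def by blast

lemma as_add_scalar: "as (c + d) a = as c a + as d a"
  using star_alg_P unfolding star_alg_def by meson
lemma as_mult_left: "as c (a * b) = as c a * b"
  using star_alg_P unfolding star_alg_def by meson
lemma as_mult_right: "as c (a * b) = a * as c b"
  using star_alg_P unfolding star_alg_def by meson
lemma st_add: "st (a + b) = st a + st b"
  using star_alg_P unfolding star_alg_def by meson
lemma st_as: "st (as c a) = as (cnj c) (st a)"
  using star_alg_P unfolding star_alg_def by meson
lemma st_mult: "st (a * b) = st b * st a"
  using star_alg_P unfolding star_alg_def by meson
lemma st_st [simp]: "st (st a) = a"
  using star_alg_P unfolding star_alg_def by meson
lemma tr_commute: "tr (a * b) = tr (b * a)"
  using fin unfolding fin_pvn_def by blast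
lemma tr_faithful: "tr (st a * a) = 0 \<Longrightarrow> a = 0"
  using fin unfolding fin_pvn_def by blast
lemma left_mult_bounded_tr: "\<exists>C. \<forall>b. Re (tr (st (a * b) * (a * b))) \<le> C * Re (tr (st b * b))"
  using fin unfolding fin_pvn_def by blast
lemma G_add: "G (a + b) = G a + G b"
  using emb unfolding emb_def by blast
lemma G_as: "G (as c a) = sc c (G a)"
  using emb unfolding emb_def by blast
lemma G_ip: "ip (G a) (G b) = tr (st b * a)"
  using emb unfolding emb_def by blast

lemma as_zero_left [simp]: "as 0 a = 0"
  using as_add_scalar[of 0 0 a] by simp
lemma st_one [simp]: "st 1 = 1"
  using st_mult[of "st 1" 1] by simp
lemma G_zero [simp]: "G 0 = 0"
  using G_add[of 0 0] by simp
lemma G_diff: "G (a - b) = G a - G b"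
  using G_add[of "a - b" b] by (simp add: eq_diff_eq)

lemma inj_G: "inj G"
proof (rule injI)
  fix a b assume "G a = G b"
  then have "G (a - b) = 0" by (simp add: G_diff)
  then have "tr (st (a - b) * (a - b)) = 0" using G_ip[of "a - b" "a - b"] by simp
  then show "a = b" using tr_faithful[of "a - b"] by simp
qed

lemma inv_G_G [simp]: "inv G (G a) = a"
  by (rule inv_f_f[OF inj_G])

lemma nm_G_sq: "(nm (G a))^2 = Re (tr (st a * a))"
  using nm_sq G_ip by simp

lemma nm_G_st: "nm (G (st b)) = nm (G b)"
proof -
  have "(nm (G (st b)))^2 = (nm (G b))^2"
    using tr_commute[of b "st b"] by (simp add: nm_G_sq)
  then show ?thesis by (simp add: power2_eq_iff_nonneg)
qed

lemma subalg_one: "subalg P A \<Longrightarrow> 1 \<in> A" unfolding subalg_def by blast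
lemma subalg_add: "subalg P A \<Longrightarrow> a \<in> A \<Longrightarrow> b \<in> A \<Longrightarrow> a + b \<in> A" unfolding subalg_def by blast
lemma subalg_mult: "subalg P A \<Longrightarrow> a \<in> A \<Longrightarrow> b \<in> A \<Longrightarrow> a * b \<in> A" unfolding subalg_def by blast
lemma subalg_as: "subalg P A \<Longrightarrow> a \<in> A \<Longrightarrow> as c a \<in> A" unfolding subalg_def by blast
lemma subalg_st: "subalg P A \<Longrightarrow> a \<in> A \<Longrightarrow> st a \<in> A" unfolding subalg_def by blast
lemma subalg_zero: "subalg P A \<Longrightarrow> 0 \<in> A" using subalg_as[of A 1 0] subalg_one by simp
lemma subalg_UNIV: "subalg P UNIV" unfolding subalg_def by simp

lemma subspace_G_image: assumes A: "subalg P A" shows "subspace (G ` A)"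
  unfolding subspace_def
proof (intro conjI ballI allI)
  show "0 \<in> G ` A" using subalg_zero[OF A] G_zero by (metis image_eqI)
  show "x + y \<in> G ` A" if "x \<in> G ` A" "y \<in> G ` A" for x y
    using that subalg_add[OF A] by (auto simp: image_iff) (metis G_add)
  show "sc c x \<in> G ` A" if "x \<in> G ` A" for c x
    using that subalg_as[OF A] by (auto simp: image_iff) (metis G_as)
qed

abbreviation \<H> where "\<H> A \<equiv> HA H G A"

lemma closed_subspace_HA: "subalg P A \<Longrightarrow> closed_subspace (\<H> A)"
  unfolding HA_def using closed_subspace_hcl subspace_G_image by blast
lemma subspace_HA: "subalg P A \<Longrightarrow> subspace (\<H> A)"
  using closed_subspace_HA closed_subspace_imp_subspace by blast
lemma HA_UNIV [simp]: "\<H> UNIV = UNIV" unfolding HA_def using dense by simp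
lemma G_in_HA: "a \<in> A \<Longrightarrow> G a \<in> \<H> A" unfolding HA_def using hcl_superset by blast

abbreviation \<Omega> where "\<Omega> \<equiv> G 1"

lemma Omega_in_HA: "subalg P A \<Longrightarrow> \<Omega> \<in> \<H> A" using G_in_HA subalg_one by blast

lemma bop_HA_exists:
  assumes A: "subalg P A" and gA: "\<And>b. b \<in> A \<Longrightarrow> g b \<in> A"
    and gadd: "\<And>a b. a \<in> A \<Longrightarrow> b \<in> A \<Longrightarrow> g (a + b) = g a + g b"
    and gsc: "\<And>c b. b \<in> A \<Longrightarrow> g (as c b) = as c (g b)"
    and gb: "\<And>b. b \<in> A \<Longrightarrow> nm (G (g b)) \<le> C * nm (G b)"
  shows "\<exists>T. bop H (\<H> A) T \<and> (\<forall>b\<in>A. T (G b) = G (g b))"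
proof -
  define f where "f v = G (g (inv G v))" for v
  have "\<exists>T. bop H (hcl H (G ` A)) T \<and> (\<forall>x\<in>G ` A. T x = f x)"
  proof (rule bop_extension[OF subspace_G_image[OF A]])
    show "f (x + y) = f x + f y" if "x \<in> G ` A" "y \<in> G ` A" for x y
      using that unfolding f_def by (auto simp: G_add[symmetric] gadd subalg_add[OF A])
    show "f (sc c x) = sc c (f x)" if "x \<in> G ` A" for c x
      using that unfolding f_def by (auto simp: G_as[symmetric] gsc)
    show "nm (f x) \<le> C * nm x" if "x \<in> G ` A" for x
      using that unfolding f_def by (auto simp: gb)
    show "f x \<in> hcl H (G ` A)" if "x \<in> G ` A" for x
      using that unfolding f_def using gA hcl_superset by fastforce
  qed
  then show ?thesis unfolding HA_def f_def by auto
qed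

lemma bop_HA_eqI:
  assumes A: "subalg P A" and "bop H (\<H> A) T" "bop H (\<H> A) S" "\<And>b. b \<in> A \<Longrightarrow> T (G b) = S (G b)"
  shows "T = S"
  using bop_eq_on_dense[OF subspace_G_image[OF A]] assms unfolding HA_def by blast

lemma bop_HA_the:
  assumes A: "subalg P A" and ex: "\<exists>T. bop H (\<H> A) T \<and> (\<forall>b\<in>A. T (G b) = G (g b))"
  shows "bop H (\<H> A) (THE T. bop H (\<H> A) T \<and> (\<forall>b\<in>A. T (G b) = G (g b))) \<and>
    (\<forall>b\<in>A. (THE T. bop H (\<H> A) T \<and> (\<forall>b\<in>A. T (G b) = G (g b))) (G b) = G (g b))"
proof -
  obtain T where T: "bop H (\<H> A) T \<and> (\<forall>b\<in>A. T (G b) = G (g b))" using ex by blast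
  show ?thesis
    by (rule theI[where P="\<lambda>T. bop H (\<H> A) T \<and> (\<forall>b\<in>A. T (G b) = G (g b))", OF T])
       (use bop_HA_eqI[OF A] T in auto)
qed

lemma left_mult_bounded: "\<exists>C. \<forall>b. nm (G (a * b)) \<le> C * nm (G b)"
proof -
  obtain C where C: "\<forall>b. Re (tr (st (a * b) * (a * b))) \<le> C * Re (tr (st b * b))" using left_mult_bounded_tr by blast
  have "nm (G (a * b)) \<le> sqrt \<bar>C\<bar> * nm (G b)" for b
  proof -
    have "(nm (G (a * b)))^2 \<le> \<bar>C\<bar> * (nm (G b))^2"
    proof -
      have "(nm (G (a * b)))^2 \<le> C * (nm (G b))^2" using C nm_G_sq by simp
      also have "\<dots> \<le> \<bar>C\<bar> * (nm (G b))^2" by (rule mult_right_mono) simp_all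
      finally show ?thesis .
    qed
    then have "sqrt ((nm (G (a * b)))^2) \<le> sqrt (\<bar>C\<bar> * (nm (G b))^2)" by (rule real_sqrt_le_mono)
    thus ?thesis by (simp add: real_sqrt_mult)
  qed
  thus ?thesis by blast
qed

lemma tr_cyclic: "tr (st a * st b * b * a) = tr (b * a * st a * st b)"
proof -
  have "tr (st a * st b * b * a) = tr (st a * (st b * b * a))" by (simp add: mult.assoc)
  also have "\<dots> = tr ((st b * b * a) * st a)" by (rule tr_commute)
  also have "\<dots> = tr (st b * (b * a * st a))" by (simp add: mult.assoc)
  also have "\<dots> = tr ((b * a * st a) * st b)" by (rule tr_commute)
  finally show ?thesis by (simp add: mult.assoc)
qed
lemma right_mult_bounded: "\<exists>C. \<forall>b. nm (G (b * a)) \<le> C * nm (G b)"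
proof -
  obtain C where C: "\<forall>b. nm (G (st a * b)) \<le> C * nm (G b)" using left_mult_bounded by blast
  have "nm (G (b * a)) = nm (G (st a * st b))" for b
  proof -
    have "(nm (G (b * a)))^2 = (nm (G (st a * st b)))^2"
      using tr_cyclic[of a b] by (simp add: nm_G_sq st_mult mult.assoc)
    then show ?thesis by (simp add: power2_eq_iff_nonneg)
  qed
  then show ?thesis using C nm_G_st by metis
qed

definition rho :: "'a set \<Rightarrow> 'a \<Rightarrow> 'h \<Rightarrow> 'h" where
  "rho A a = (THE T. bop H (HA H G A) T \<and> (\<forall>b\<in>A. T (G b) = G (b * a)))"

lemma lam_char:
  assumes A: "subalg P A" and a: "a \<in> A"
  shows "bop H (\<H> A) (lam H G A a) \<and> (\<forall>b\<in>A. lam H G A a (G b) = G (a * b))"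
proof -
  obtain C where C: "\<forall>b. nm (G (a * b)) \<le> C * nm (G b)" using left_mult_bounded by blast
  have "\<exists>T. bop H (\<H> A) T \<and> (\<forall>b\<in>A. T (G b) = G (a * b))"
    by (rule bop_HA_exists[OF A]) (use C a in \<open>auto simp: subalg_mult[OF A] distrib_left as_mult_right\<close>)
  from bop_HA_the[OF A this] show ?thesis unfolding lam_def .
qed

lemma rho_char:
  assumes A: "subalg P A" and a: "a \<in> A"
  shows "bop H (\<H> A) (rho A a) \<and> (\<forall>b\<in>A. rho A a (G b) = G (b * a))"
proof -
  obtain C where C: "\<forall>b. nm (G (b * a)) \<le> C * nm (G b)" using right_mult_bounded by blast
  have "\<exists>T. bop H (\<H> A) T \<and> (\<forall>b\<in>A. T (G b) = G (b * a))"
    by (rule bop_HA_exists[OF A]) (use C a in \<open>auto simp: subalg_mult[OF A] distrib_right as_mult_left\<close>)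
  from bop_HA_the[OF A this] show ?thesis unfolding rho_def .
qed

lemma lam_bop: "subalg P A \<Longrightarrow> a \<in> A \<Longrightarrow> bop H (\<H> A) (lam H G A a)" using lam_char by blast
lemma lam_G: "subalg P A \<Longrightarrow> a \<in> A \<Longrightarrow> b \<in> A \<Longrightarrow> lam H G A a (G b) = G (a * b)" using lam_char by blast
lemma rho_bop: "subalg P A \<Longrightarrow> a \<in> A \<Longrightarrow> bop H (\<H> A) (rho A a)" using rho_char by blast
lemma rho_G: "subalg P A \<Longrightarrow> a \<in> A \<Longrightarrow> b \<in> A \<Longrightarrow> rho A a (G b) = G (b * a)" using rho_char by blast

abbreviation L where "L a \<equiv> lam H G UNIV a"
abbreviation R where "R a \<equiv> rho UNIV a"

lemma L_bop: "bop H UNIV (L a)" using lam_bop[OF subalg_UNIV] by simp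
lemma R_bop: "bop H UNIV (R a)" using rho_bop[OF subalg_UNIV] by simp
lemma L_G: "L a (G b) = G (a * b)" using lam_G[OF subalg_UNIV] by simp
lemma R_G: "R a (G b) = G (b * a)" using rho_G[OF subalg_UNIV] by simp
lemma L_Omega: "L a \<Omega> = G a" using L_G[of a 1] by simp
lemma R_Omega: "R a \<Omega> = G a" using R_G[of a 1] by simp

lemma subspace_UNIV: "subspace UNIV" using closed_subspace_UNIV closed_subspace_imp_subspace by blast

lemma bop_UNIV_hconv: "bop H UNIV T \<Longrightarrow> hconv H X x \<Longrightarrow> hconv H (\<lambda>n. T (X n)) (T x)"
  using bop_hconv[OF subspace_UNIV] by blast

lemma dense_G: "x \<in> hcl H (range G)" using dense by simp

lemma subspace_range_G: "subspace (range G)" using subspace_G_image[OF subalg_UNIV] by simp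

lemma bop_UNIV_eqI: "bop H UNIV T \<Longrightarrow> bop H UNIV S \<Longrightarrow> (\<And>b. T (G b) = S (G b)) \<Longrightarrow> T = S"
  using bop_HA_eqI[OF subalg_UNIV] by simp

lemma bop_HA_eq_restrict:
  assumes A: "subalg P A" and T: "bop H (\<H> A) T" and S: "bop H UNIV S"
    and e: "\<And>b. b \<in> A \<Longrightarrow> T (G b) = S (G b)" and v: "v \<in> \<H> A"
  shows "T v = S v"
proof (rule eq_on_hcl[of "G ` A" T S])
  show "hconv H (\<lambda>n. T (X n)) (T x)" if "\<And>n. X n \<in> G ` A" "hconv H X x" for X x
    using bop_hconv_hcl[OF subspace_G_image[OF A] T[unfolded HA_def]] that by blast
  show "hconv H (\<lambda>n. S (X n)) (S x)" if "\<And>n. X n \<in> G ` A" "hconv H X x" for X x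
    using bop_UNIV_hconv[OF S] that by blast
  show "T d = S d" if "d \<in> G ` A" for d using that e by auto
  show "v \<in> hcl H (G ` A)" using v unfolding HA_def .
qed

lemma lam_eq_L: "subalg P A \<Longrightarrow> a \<in> A \<Longrightarrow> v \<in> \<H> A \<Longrightarrow> lam H G A a v = L a v"
  by (rule bop_HA_eq_restrict[OF _ lam_bop L_bop]) (auto simp: lam_G L_G)
lemma rho_eq_R: "subalg P A \<Longrightarrow> a \<in> A \<Longrightarrow> v \<in> \<H> A \<Longrightarrow> rho A a v = R a v"
  by (rule bop_HA_eq_restrict[OF _ rho_bop R_bop]) (auto simp: rho_G R_G)

lemma L_in_HA: "subalg P A \<Longrightarrow> a \<in> A \<Longrightarrow> v \<in> \<H> A \<Longrightarrow> L a v \<in> \<H> A"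
  using lam_eq_L lam_bop bop_in by metis
lemma R_in_HA: "subalg P A \<Longrightarrow> a \<in> A \<Longrightarrow> v \<in> \<H> A \<Longrightarrow> R a v \<in> \<H> A"
  using rho_eq_R rho_bop bop_in by metis

lemma sesquilinear_eq_on_G:
  fixes F1 F2 :: "'h \<Rightarrow> 'h \<Rightarrow> complex"
  assumes c11: "\<And>X x y. hconv H X x \<Longrightarrow> (\<lambda>n. F1 (X n) y) \<longlonglongrightarrow> F1 x y"
    and c12: "\<And>Y x y. hconv H Y y \<Longrightarrow> (\<lambda>n. F1 x (Y n)) \<longlonglongrightarrow> F1 x y"
    and c21: "\<And>X x y. hconv H X x \<Longrightarrow> (\<lambda>n. F2 (X n) y) \<longlonglongrightarrow> F2 x y"
    and c22: "\<And>Y x y. hconv H Y y \<Longrightarrow> (\<lambda>n. F2 x (Y n)) \<longlonglongrightarrow> F2 x y"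
    and e: "\<And>p q. F1 (G p) (G q) = F2 (G p) (G q)"
  shows "F1 x y = F2 x y"
proof -
  have s1: "F1 u (G q) = F2 u (G q)" for u q
    by (rule eq_on_hcl_scalar[of "range G" "\<lambda>u. F1 u (G q)" "\<lambda>u. F2 u (G q)"])
       (use c11 c21 e dense_G in auto)
  show ?thesis
    by (rule eq_on_hcl_scalar[of "range G" "\<lambda>v. F1 x v" "\<lambda>v. F2 x v"])
       (use c12 c22 s1 dense_G in auto)
qed

lemma ip_hconv_bop_left: "bop H UNIV T \<Longrightarrow> hconv H X x \<Longrightarrow> (\<lambda>n. ip (T (X n)) y) \<longlonglongrightarrow> ip (T x) y"
  using hconv_ip bop_UNIV_hconv hconv_const by blast
lemma ip_hconv_bop_right: "bop H UNIV T \<Longrightarrow> hconv H Y y \<Longrightarrow> (\<lambda>n. ip x (T (Y n))) \<longlonglongrightarrow> ip x (T y)"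
  using hconv_ip bop_UNIV_hconv hconv_const by blast
lemma ip_hconv_left: "hconv H X x \<Longrightarrow> (\<lambda>n. ip (X n) y) \<longlonglongrightarrow> ip x y"
  using hconv_ip hconv_const by blast
lemma ip_hconv_right: "hconv H Y y \<Longrightarrow> (\<lambda>n. ip x (Y n)) \<longlonglongrightarrow> ip x y"
  using hconv_ip hconv_const by blast

lemma L_adj: "ip (L a u) v = ip u (L (st a) v)"
proof (rule sesquilinear_eq_on_G[of "\<lambda>u v. ip (L a u) v" "\<lambda>u v. ip u (L (st a) v)"])
  show "ip (L a (G p)) (G q) = ip (G p) (L (st a) (G q))" for p q
    by (simp add: L_G G_ip st_mult mult.assoc)
qed (auto intro: ip_hconv_bop_left ip_hconv_bop_right ip_hconv_left ip_hconv_right L_bop)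

lemma R_adj: "ip (R a u) v = ip u (R (st a) v)"
proof (rule sesquilinear_eq_on_G[of "\<lambda>u v. ip (R a u) v" "\<lambda>u v. ip u (R (st a) v)"])
  show "ip (R a (G p)) (G q) = ip (G p) (R (st a) (G q))" for p q
    using tr_commute[of "st q * p" a] by (simp add: R_G G_ip st_mult mult.assoc)
qed (auto intro: ip_hconv_bop_left ip_hconv_bop_right ip_hconv_left ip_hconv_right R_bop)

lemma R_R: "R a (R b v) = R (b * a) v"
proof -
  have "R a \<circ> R b = R (b * a)"
    by (rule bop_UNIV_eqI) (auto simp: R_G mult.assoc intro: bop_comp[OF subspace_UNIV] R_bop)
  thus ?thesis by (metis comp_apply)
qed
lemma L_R_commute: "L a (R b v) = R b (L a v)"
proof -
  have "L a \<circ> R b = R b \<circ> L a"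
    by (rule bop_UNIV_eqI) (auto simp: L_G R_G mult.assoc intro: bop_comp[OF subspace_UNIV] R_bop L_bop)
  thus ?thesis by (metis comp_apply)
qed

abbreviation J where "J \<equiv> Jop P H G UNIV"

definition is_J :: "('h \<Rightarrow> 'h) \<Rightarrow> bool" where
  "is_J j \<longleftrightarrow> (\<forall>x. x \<notin> \<H> UNIV \<longrightarrow> j x = 0) \<and>
     (\<forall>x\<in>\<H> UNIV. \<forall>y\<in>\<H> UNIV. j (x + y) = j x + j y) \<and>
     (\<forall>c. \<forall>x\<in>\<H> UNIV. j (sc c x) = sc (cnj c) (j x)) \<and>
     (\<exists>C. \<forall>x\<in>\<H> UNIV. nm (j x) \<le> C * nm x) \<and>
     (\<forall>b\<in>UNIV. j (G b) = G (st b))"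

lemma is_J_exists: "\<exists>j. is_J j"
proof -
  interpret E: dense_extension H "range G" "\<lambda>v. G (st (inv G v))" cnj 1
    by unfold_locales
      (auto simp: subspace_range_G G_add[symmetric] st_add G_as[symmetric] st_as nm_G_st)
  have "is_J E.cont_ext"
    unfolding is_J_def using E.cont_ext_add E.cont_ext_sc E.cont_ext_bound E.cont_ext_eq dense
    by (auto intro!: exI[of _ 1])
  then show ?thesis by blast
qed

lemma is_J_hconv:
  assumes j: "is_J j" and c: "hconv H X x" shows "hconv H (\<lambda>n. j (X n)) (j x)"
proof -
  obtain C where C: "\<forall>x. nm (j x) \<le> C * nm x" using j unfolding is_J_def by auto
  have add: "\<And>x y. j (x + y) = j x + j y" using j unfolding is_J_def by auto
  have diff: "j (x - y) = j x - j y" for x y using add[of "x - y" y] by (simp add: eq_diff_eq)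
  show ?thesis
  proof (rule hconv_by_bound)
    show "nm (j (X n) - j x) \<le> C * nm (X n - x)" for n using C diff by metis
    show "(\<lambda>n. C * nm (X n - x)) \<longlonglongrightarrow> 0" using c unfolding hconv_iff
      by (simp add: tendsto_mult_right_zero)
  qed
qed

lemma is_J_unique: assumes "is_J j1" "is_J j2" shows "j1 = j2"
proof
  fix x
  show "j1 x = j2 x"
    by (rule eq_on_hcl[of "range G" j1 j2])
       (use assms is_J_hconv dense_G in \<open>auto simp: is_J_def\<close>)
qed

lemma is_J_J: "is_J J"
proof -
  obtain j where j: "is_J j" using is_J_exists by blast
  have "J = j" unfolding Jop_def
    by (rule the_equality) (use j is_J_unique in \<open>auto simp: is_J_def\<close>)
  then show ?thesis using j by simp
qed

lemma J_G: "J (G b) = G (st b)"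
  using is_J_J unfolding is_J_def by blast
lemma J_hconv: "hconv H X x \<Longrightarrow> hconv H (\<lambda>n. J (X n)) (J x)"
  using is_J_hconv[OF is_J_J] .

lemma J_J: "J (J x) = x"
proof (rule eq_on_hcl[of "range G" "\<lambda>x. J (J x)" "\<lambda>x. x"])
  show "hconv H (\<lambda>n. J (J (X n))) (J (J x))" if "hconv H X x" for X x
    using J_hconv[OF J_hconv[OF that]] .
qed (auto simp: J_G dense_G)

lemma J_ip: "ip (J u) (J v) = ip v u"
proof (rule sesquilinear_eq_on_G[of "\<lambda>u v. ip (J u) (J v)" "\<lambda>u v. ip v u"])
  show "ip (J (G p)) (J (G q)) = ip (G q) (G p)" for p q
    using tr_commute[of q "st p"] by (simp add: J_G G_ip)
next
  show "(\<lambda>n. ip (J (X n)) (J y)) \<longlonglongrightarrow> ip (J x) (J y)" if "hconv H X x" for X x y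
    using ip_hconv_left[OF J_hconv[OF that]] .
  show "(\<lambda>n. ip (J x) (J (X n))) \<longlonglongrightarrow> ip (J x) (J y)" if "hconv H X y" for X x y
    using ip_hconv_right[OF J_hconv[OF that]] .
  show "(\<lambda>n. ip y (X n)) \<longlonglongrightarrow> ip y x" if "hconv H X x" for X x y
    using ip_hconv_right[OF that] .
  show "(\<lambda>n. ip (X n) x) \<longlonglongrightarrow> ip y x" if "hconv H X y" for X x y
    using ip_hconv_left[OF that] .
qed

lemma J_ip_swap: "ip (J u) v = ip (J v) u"
proof -
  have "ip (J u) (J (J v)) = ip (J v) u" by (rule J_ip)
  then show ?thesis by (simp only: J_J)
qed

lemma J_in_HA: assumes A: "subalg P A" and u: "u \<in> \<H> A" shows "J u \<in> \<H> A"
proof -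
  obtain X where X: "\<And>n. X n \<in> G ` A" "hconv H X u" using u unfolding HA_def hcl_def by blast
  have "J (X n) \<in> G ` A" for n
  proof -
    obtain a where "a \<in> A" "X n = G a" using X(1)[of n] by blast
    then show ?thesis using subalg_st[OF A] by (simp add: J_G)
  qed
  thus ?thesis unfolding HA_def using hclI[of "\<lambda>n. J (X n)" "G ` A" "J u"] J_hconv[OF X(2)] by blast
qed

lemma J_L_J: "J (L a (J v)) = R (st a) v"
proof (rule eq_on_hcl[of "range G" "\<lambda>v. J (L a (J v))" "R (st a)"])
  show "hconv H (\<lambda>n. J (L a (J (X n)))) (J (L a (J x)))" if "hconv H X x" for X x
    using J_hconv[OF bop_UNIV_hconv[OF L_bop J_hconv[OF that]]] .
  show "hconv H (\<lambda>n. R (st a) (X n)) (R (st a) x)" if "hconv H X x" for X x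
    using bop_UNIV_hconv[OF R_bop that] .
qed (auto simp: J_G L_G R_G st_mult dense_G)

lemma vN_bop: "x \<in> vN H G A \<Longrightarrow> bop H (\<H> A) x" unfolding vN_def using comm_bop by blast

lemma vN_add: "subalg P A \<Longrightarrow> x \<in> vN H G A \<Longrightarrow> y \<in> vN H G A \<Longrightarrow> (\<lambda>v. x v + y v) \<in> vN H G A"
  unfolding vN_def by (rule comm_add[OF subspace_HA]) (auto dest: comm_bop)
lemma vN_sc: "subalg P A \<Longrightarrow> x \<in> vN H G A \<Longrightarrow> (\<lambda>v. sc c (x v)) \<in> vN H G A"
  unfolding vN_def by (rule comm_sc[OF subspace_HA]) (auto dest: comm_bop)
lemma vN_comp: "subalg P A \<Longrightarrow> x \<in> vN H G A \<Longrightarrow> y \<in> vN H G A \<Longrightarrow> x \<circ> y \<in> vN H G A"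
  unfolding vN_def by (rule comm_comp[OF subspace_HA])
lemma lam_vN: "subalg P A \<Longrightarrow> a \<in> A \<Longrightarrow> lam H G A a \<in> vN H G A"
  unfolding vN_def by (rule comm_comm_superset[OF lam_bop]) auto

lemma rho_in_comm_lam:
  assumes A: "subalg P A" and a: "a \<in> A"
  shows "rho A a \<in> comm H (\<H> A) (lam H G A ` A)"
proof (rule commI[OF rho_bop[OF A a]])
  fix s x assume s: "s \<in> lam H G A ` A" and x: "x \<in> \<H> A"
  then obtain b where b: "b \<in> A" "s = lam H G A b" by blast
  have "rho A a (lam H G A b x) = R a (L b x)"
    using lam_eq_L[OF A b(1) x] rho_eq_R[OF A a L_in_HA[OF A b(1) x]] by simp
  also have "\<dots> = L b (R a x)" by (rule L_R_commute[symmetric])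
  also have "\<dots> = lam H G A b (rho A a x)"
    using rho_eq_R[OF A a x] lam_eq_L[OF A b(1) R_in_HA[OF A a x]] by simp
  finally show "rho A a (s x) = s (rho A a x)" using b by simp
qed

definition rcomm :: "'a set \<Rightarrow> ('h \<Rightarrow> 'h) set" where
  "rcomm A = {x. bop H (\<H> A) x \<and> (\<forall>a\<in>A. \<forall>v\<in>\<H> A. x (R a v) = R a (x v))}"

lemma rcomm_bop: "x \<in> rcomm A \<Longrightarrow> bop H (\<H> A) x" unfolding rcomm_def by blast
lemma rcomm_commute: "x \<in> rcomm A \<Longrightarrow> a \<in> A \<Longrightarrow> v \<in> \<H> A \<Longrightarrow> x (R a v) = R a (x v)" unfolding rcomm_def by blast

lemma vN_subset_rcomm: assumes A: "subalg P A" and x: "x \<in> vN H G A" shows "x \<in> rcomm A"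
  unfolding rcomm_def
proof (intro CollectI conjI ballI)
  show "bop H (\<H> A) x" using vN_bop[OF x] .
  fix a v assume a: "a \<in> A" and v: "v \<in> \<H> A"
  have "x (rho A a v) = rho A a (x v)"
    using comm_commute[OF x[unfolded vN_def] rho_in_comm_lam[OF A a] v] .
  then show "x (R a v) = R a (x v)"
    using rho_eq_R[OF A a v] rho_eq_R[OF A a bop_in[OF vN_bop[OF x] v]] by simp
qed

lemma vN_R_commute: "subalg P A \<Longrightarrow> x \<in> vN H G A \<Longrightarrow> a \<in> A \<Longrightarrow> v \<in> \<H> A \<Longrightarrow> x (R a v) = R a (x v)"
  using vN_subset_rcomm rcomm_commute by blast

lemma bop_HA_hconv:
  assumes A: "subalg P A" and T: "bop H (\<H> A) T" and X: "\<And>n. X n \<in> \<H> A" "hconv H X y"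
  shows "hconv H (\<lambda>n. T (X n)) (T y)"
  using bop_hconv[OF subspace_HA[OF A] T X(1) closed_subspace_hconv[OF closed_subspace_HA[OF A] X]]
    X(2) .

lemma G_image_in_HA: "v \<in> G ` A \<Longrightarrow> v \<in> \<H> A" unfolding HA_def using hcl_superset by blast

subsection \<open>The commutation theorem\<close>

lemma ip_L_R_J_identity: "ip (L a y) (R c (J x)) = ip x (L c (R (st a) (J y)))"
proof (rule sesquilinear_eq_on_G[of "\<lambda>x y. ip (L a y) (R c (J x))" "\<lambda>x y. ip x (L c (R (st a) (J y)))"])
  show "ip (L a (G q)) (R c (J (G p))) = ip (G p) (L c (R (st a) (J (G q))))" for p q
    using tr_commute[of "st c * p" "a * q"] by (simp add: J_G L_G R_G G_ip st_mult mult.assoc)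
  show "(\<lambda>n. ip (L a y) (R c (J (X n)))) \<longlonglongrightarrow> ip (L a y) (R c (J x))" if "hconv H X x" for X x y
    using ip_hconv_right[OF bop_UNIV_hconv[OF R_bop J_hconv[OF that]]] .
  show "(\<lambda>n. ip (L a (X n)) (R c (J x))) \<longlonglongrightarrow> ip (L a y) (R c (J x))" if "hconv H X y" for X x y
    using ip_hconv_left[OF bop_UNIV_hconv[OF L_bop that]] .
  show "(\<lambda>n. ip (X n) (L c (R (st a) (J y)))) \<longlonglongrightarrow> ip x (L c (R (st a) (J y)))" if "hconv H X x" for X x y
    using ip_hconv_left[OF that] .
  show "(\<lambda>n. ip x (L c (R (st a) (J (X n))))) \<longlonglongrightarrow> ip x (L c (R (st a) (J y)))" if "hconv H X y" for X x y
    using ip_hconv_right[OF bop_UNIV_hconv[OF L_bop bop_UNIV_hconv[OF R_bop J_hconv[OF that]]]] .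
qed

lemma comm_lam_L_commute:
  assumes A: "subalg P A" and T: "T \<in> comm H (\<H> A) (lam H G A ` A)"
    and b: "b \<in> A" and w: "w \<in> \<H> A"
  shows "T (L b w) = L b (T w)"
  using comm_commute[OF T, of "lam H G A b" w] b w lam_eq_L[OF A b] bop_in[OF comm_bop[OF T]]
    L_in_HA[OF A] by auto

lemma comm_lam_ip_R:
  assumes A: "subalg P A" and T: "T \<in> comm H (\<H> A) (lam H G A ` A)"
    and a: "a \<in> A" and c: "c \<in> A" and u: "u \<in> \<H> A"
  shows "ip (T (R a u)) (G c) = ip (L a (T \<Omega>)) (R c (J u))"
proof (rule eq_on_hcl_scalar[of "G ` A" "\<lambda>u. ip (T (R a u)) (G c)" "\<lambda>u. ip (L a (T \<Omega>)) (R c (J u))"])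
  show "(\<lambda>n. ip (T (R a (X n))) (G c)) \<longlonglongrightarrow> ip (T (R a y)) (G c)"
    if "\<And>n. X n \<in> G ` A" "hconv H X y" for X y
    using ip_hconv_left[OF bop_HA_hconv[OF A comm_bop[OF T] _ bop_UNIV_hconv[OF R_bop that(2)]]]
      R_in_HA[OF A a G_image_in_HA[OF that(1)]] by blast
  show "(\<lambda>n. ip (L a (T \<Omega>)) (R c (J (X n)))) \<longlonglongrightarrow> ip (L a (T \<Omega>)) (R c (J y))"
    if "hconv H X y" for X y
    using ip_hconv_right[OF bop_UNIV_hconv[OF R_bop J_hconv[OF that]]] .
  show "ip (T (R a d)) (G c) = ip (L a (T \<Omega>)) (R c (J d))" if d: "d \<in> G ` A" for d
  proof -
    obtain p where p: "p \<in> A" "d = G p" using d by blast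
    have "T (R a d) = T (L p (L a \<Omega>))" using p by (simp add: R_G L_G)
    also have "\<dots> = L p (L a (T \<Omega>))"
      using comm_lam_L_commute[OF A T p(1) L_in_HA[OF A a Omega_in_HA[OF A]]]
        comm_lam_L_commute[OF A T a Omega_in_HA[OF A]] by simp
    finally have "ip (T (R a d)) (G c) = ip (L p (L a (T \<Omega>))) (G c)" by simp
    also have "\<dots> = ip (L a (T \<Omega>)) (L (st p) (G c))" by (rule L_adj)
    also have "\<dots> = ip (L a (T \<Omega>)) (R c (J d))" using p by (simp add: L_G R_G J_G)
    finally show ?thesis .
  qed
qed (use u in \<open>simp add: HA_def\<close>)

lemma rcomm_ip_L:
  assumes A: "subalg P A" and x: "x \<in> rcomm A"
    and a: "a \<in> A" and c: "c \<in> A" and u: "u \<in> \<H> A"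
  shows "ip (x (L a u)) (G c) = ip (x \<Omega>) (L c (R (st a) (J u)))"
proof (rule eq_on_hcl_scalar[of "G ` A" "\<lambda>u. ip (x (L a u)) (G c)" "\<lambda>u. ip (x \<Omega>) (L c (R (st a) (J u)))"])
  show "(\<lambda>n. ip (x (L a (X n))) (G c)) \<longlonglongrightarrow> ip (x (L a y)) (G c)"
    if "\<And>n. X n \<in> G ` A" "hconv H X y" for X y
    using ip_hconv_left[OF bop_HA_hconv[OF A rcomm_bop[OF x] _ bop_UNIV_hconv[OF L_bop that(2)]]]
      L_in_HA[OF A a G_image_in_HA[OF that(1)]] by blast
  show "(\<lambda>n. ip (x \<Omega>) (L c (R (st a) (J (X n))))) \<longlonglongrightarrow> ip (x \<Omega>) (L c (R (st a) (J y)))"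
    if "hconv H X y" for X y
    using ip_hconv_right[OF bop_UNIV_hconv[OF L_bop bop_UNIV_hconv[OF R_bop J_hconv[OF that]]]] .
  show "ip (x (L a d)) (G c) = ip (x \<Omega>) (L c (R (st a) (J d)))" if d: "d \<in> G ` A" for d
  proof -
    obtain q where q: "q \<in> A" "d = G q" using d by blast
    have "x (L a d) = x (R q (R a \<Omega>))" using q by (simp add: R_G L_G)
    also have "\<dots> = R q (R a (x \<Omega>))"
      using rcomm_commute[OF x q(1) R_in_HA[OF A a Omega_in_HA[OF A]]]
        rcomm_commute[OF x a Omega_in_HA[OF A]] by simp
    finally have "ip (x (L a d)) (G c) = ip (R q (R a (x \<Omega>))) (G c)" by simp
    also have "\<dots> = ip (R a (x \<Omega>)) (R (st q) (G c))" by (rule R_adj)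
    also have "\<dots> = ip (x \<Omega>) (R (st a) (R (st q) (G c)))" by (rule R_adj)
    also have "\<dots> = ip (x \<Omega>) (L c (R (st a) (J d)))" using q by (simp add: L_G R_G J_G mult.assoc)
    finally show ?thesis .
  qed
qed (use u in \<open>simp add: HA_def\<close>)

lemma rcomm_subset_vN:
  assumes A: "subalg P A" and x: "x \<in> rcomm A"
  shows "x \<in> vN H G A"
  unfolding vN_def
proof (rule commI)
  show xb: "bop H (\<H> A) x" using rcomm_bop[OF x] .
  fix T v assume T: "T \<in> comm H (\<H> A) (lam H G A ` A)" and v: "v \<in> \<H> A"
  have Tb: "bop H (\<H> A) T" using comm_bop[OF T] .
  have S: "subspace (\<H> A)" using subspace_HA[OF A] .
  have OmA: "\<Omega> \<in> \<H> A" using Omega_in_HA[OF A] .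
  have "T (x (G a)) = x (T (G a))" if a: "a \<in> A" for a
  proof -
    have xG: "x (G a) = R a (x \<Omega>)" using rcomm_commute[OF x a OmA] R_Omega by simp
    have TG: "T (G a) = L a (T \<Omega>)" using comm_lam_L_commute[OF A T a OmA] L_Omega by simp
    have "T (x (G a)) - x (T (G a)) = 0"
    proof (rule orth_dense_eq_0)
      show "T (x (G a)) - x (T (G a)) \<in> hcl H (G ` A)"
        using bop_in[OF Tb bop_in[OF xb G_in_HA[OF a]]] bop_in[OF xb bop_in[OF Tb G_in_HA[OF a]]]
          subspace_diff[OF S] unfolding HA_def by blast
      fix d assume "d \<in> G ` A"
      then obtain c where c: "c \<in> A" "d = G c" by blast
      show "ip (T (x (G a)) - x (T (G a))) d = 0"
        using comm_lam_ip_R[OF A T a c(1) bop_in[OF xb OmA]] rcomm_ip_L[OF A x a c(1) bop_in[OF Tb OmA]]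
          ip_L_R_J_identity[of a "T \<Omega>" c "x \<Omega>"] c(2) xG TG
        by (simp add: ip_diff_left)
    qed
    then show ?thesis by simp
  qed
  then have "T \<circ> x = x \<circ> T"
    by (intro bop_HA_eqI[OF A bop_comp[OF S Tb xb] bop_comp[OF S xb Tb]]) simp
  then show "x (T v) = T (x v)" by (metis comp_apply)
qed

lemma retraction_in: "retraction P A E \<Longrightarrow> E a \<in> A" unfolding retraction_def by blast
lemma retraction_bimodule: "retraction P A E \<Longrightarrow> x \<in> A \<Longrightarrow> y \<in> A \<Longrightarrow> E (x * a * y) = x * E a * y"
  unfolding retraction_def by blast
lemma retraction_tr: "retraction P A E \<Longrightarrow> tr (E a) = tr a" unfolding retraction_def by blast
lemma retraction_left: "subalg P A \<Longrightarrow> retraction P A E \<Longrightarrow> x \<in> A \<Longrightarrow> E (x * a) = x * E a"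
  using retraction_bimodule[of A E x 1 a] subalg_one by simp
lemma retraction_right: "subalg P A \<Longrightarrow> retraction P A E \<Longrightarrow> y \<in> A \<Longrightarrow> E (a * y) = E a * y"
  using retraction_bimodule[of A E 1 y a] subalg_one by simp

abbreviation jones where "jones A \<equiv> proj (\<H> A)"

lemma jones_G:
  assumes A: "subalg P A" and E: "retraction P A E"
  shows "jones A (G b) = G (E b)"
proof (rule proj_eqI[OF closed_subspace_HA[OF A]])
  show "G (E b) \<in> \<H> A" using G_in_HA retraction_in[OF E] by blast
  fix k assume k: "k \<in> \<H> A"
  show "ip (G b) k = ip (G (E b)) k"
  proof (rule eq_on_hcl_scalar[of "G ` A" "ip (G b)" "ip (G (E b))"])
    show "(\<lambda>n. ip (G b) (X n)) \<longlonglongrightarrow> ip (G b) x" if "\<And>n. X n \<in> G ` A" "hconv H X x" for X x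
      using ip_hconv_right[OF that(2)] .
    show "(\<lambda>n. ip (G (E b)) (X n)) \<longlonglongrightarrow> ip (G (E b)) x" if "\<And>n. X n \<in> G ` A" "hconv H X x" for X x
      using ip_hconv_right[OF that(2)] .
    show "ip (G b) d = ip (G (E b)) d" if hd: "d \<in> G ` A" for d
    proof -
      obtain a where a: "a \<in> A" "d = G a" using hd by blast
      have "tr (st a * E b) = tr (E (st a * b))" using retraction_left[OF A E subalg_st[OF A a(1)]] by simp
      also have "\<dots> = tr (st a * b)" using retraction_tr[OF E] .
      finally show ?thesis using a by (simp add: G_ip)
    qed
    show "k \<in> hcl H (G ` A)" using k unfolding HA_def .
  qed
qed

lemma bop_jones: "subalg P A \<Longrightarrow> bop H UNIV (jones A)" using bop_proj closed_subspace_HA by blast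

lemma jones_R:
  assumes A: "subalg P A" and E: "retraction P A E" and a: "a \<in> A"
  shows "jones A (R a v) = R a (jones A v)"
proof -
  have "jones A \<circ> R a = R a \<circ> jones A"
  proof (rule bop_UNIV_eqI)
    show "bop H UNIV (jones A \<circ> R a)" using bop_comp[OF subspace_UNIV bop_jones[OF A] R_bop] .
    show "bop H UNIV (R a \<circ> jones A)" using bop_comp[OF subspace_UNIV R_bop bop_jones[OF A]] .
    fix b show "(jones A \<circ> R a) (G b) = (R a \<circ> jones A) (G b)"
      using retraction_right[OF A E a] by (simp add: R_G jones_G[OF A E])
  qed
  then show ?thesis by (metis comp_apply)
qed

lemma jones_R_HA:
  assumes A: "subalg P A" and E: "retraction P A E" and v: "v \<in> \<H> A"
  shows "jones A (R b v) = R (E b) v"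
proof (rule eq_on_hcl[of "G ` A" "\<lambda>v. jones A (R b v)" "R (E b)"])
  show "hconv H (\<lambda>n. jones A (R b (X n))) (jones A (R b x))" if "\<And>n. X n \<in> G ` A" "hconv H X x" for X x
    using bop_UNIV_hconv[OF bop_jones[OF A] bop_UNIV_hconv[OF R_bop that(2)]] .
  show "hconv H (\<lambda>n. R (E b) (X n)) (R (E b) x)" if "\<And>n. X n \<in> G ` A" "hconv H X x" for X x
    using bop_UNIV_hconv[OF R_bop that(2)] .
  show "jones A (R b d) = R (E b) d" if hd: "d \<in> G ` A" for d
  proof -
    obtain a where a: "a \<in> A" "d = G a" using hd by blast
    then show ?thesis using retraction_left[OF A E a(1)] by (simp add: R_G jones_G[OF A E])
  qed
  show "v \<in> hcl H (G ` A)" using v unfolding HA_def .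
qed

lemma ip_R_retraction:
  assumes A: "subalg P A" and E: "retraction P A E" and u: "u \<in> \<H> A" and w: "w \<in> \<H> A"
  shows "ip (R b u) w = ip (R (E b) u) w"
proof -
  have K: "closed_subspace (\<H> A)" using closed_subspace_HA[OF A] .
  have "ip (R b u) w = ip (R b u) (jones A w)" using proj_id[OF K w] by simp
  also have "\<dots> = ip (jones A (R b u)) w" using proj_self_adjoint[OF K] by simp
  also have "\<dots> = ip (R (E b) u) w" using jones_R_HA[OF A E u] by simp
  finally show ?thesis .
qed

subsection \<open>The normal inclusion\<close>

abbreviation \<iota> where "\<iota> A x \<equiv> iota P H G A UNIV x"
abbreviation M where "M \<equiv> vN H G UNIV"

lemma adj_Omega_eq_J:
  assumes A: "subalg P A" and x: "x \<in> rcomm A"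
  shows "adj H (\<H> A) x \<Omega> = J (x \<Omega>)"
proof -
  have K: "closed_subspace (\<H> A)" using closed_subspace_HA[OF A] .
  have xb: "bop H (\<H> A) x" using rcomm_bop[OF x] .
  have OmA: "\<Omega> \<in> \<H> A" using Omega_in_HA[OF A] .
  show ?thesis
  proof (rule eq_by_ip_dense[OF subspace_G_image[OF A]])
    show "adj H (\<H> A) x \<Omega> \<in> hcl H (G ` A)"
      using bop_in[OF adj_bop[OF K xb] OmA] unfolding HA_def .
    show "J (x \<Omega>) \<in> hcl H (G ` A)" using J_in_HA[OF A bop_in[OF xb OmA]] unfolding HA_def .
    fix d assume "d \<in> G ` A"
    then obtain a where a: "a \<in> A" "d = G a" by blast
    have "ip (adj H (\<H> A) x \<Omega>) (G a) = ip \<Omega> (x (G a))"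
      using adj_ip2[OF K xb OmA G_in_HA[OF a(1)]] .
    also have "x (G a) = R a (x \<Omega>)" using rcomm_commute[OF x a(1) OmA] R_Omega by simp
    also have "ip \<Omega> (R a (x \<Omega>)) = ip (R (st a) \<Omega>) (x \<Omega>)" using R_adj[of "st a" \<Omega> "x \<Omega>"] by simp
    also have "\<dots> = ip (J (G a)) (x \<Omega>)" by (simp add: R_Omega J_G)
    also have "\<dots> = ip (J (x \<Omega>)) (G a)" by (rule J_ip_swap)
    finally show "ip (adj H (\<H> A) x \<Omega>) d = ip (J (x \<Omega>)) d" using a by simp
  qed
qed

lemma rcomm_comp:
  assumes A: "subalg P A" and x: "x \<in> rcomm A" and y: "y \<in> rcomm A"
  shows "x \<circ> y \<in> rcomm A"
  unfolding rcomm_def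
  using bop_comp[OF subspace_HA[OF A] rcomm_bop[OF x] rcomm_bop[OF y]]
    rcomm_commute[OF x] rcomm_commute[OF y] bop_in[OF rcomm_bop[OF y]] by auto

lemma rcomm_adj:
  assumes A: "subalg P A" and x: "x \<in> rcomm A"
  shows "adj H (\<H> A) x \<in> rcomm A"
  unfolding rcomm_def
proof (intro CollectI conjI ballI)
  have K: "closed_subspace (\<H> A)" using closed_subspace_HA[OF A] .
  have xb: "bop H (\<H> A) x" using rcomm_bop[OF x] .
  show xsb: "bop H (\<H> A) (adj H (\<H> A) x)" using adj_bop[OF K xb] .
  fix d v assume d: "d \<in> A" and v: "v \<in> \<H> A"
  show "adj H (\<H> A) x (R d v) = R d (adj H (\<H> A) x v)"
  proof (rule eq_by_ip_closed_subspace[OF K])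
    show "adj H (\<H> A) x (R d v) \<in> \<H> A" using bop_in[OF xsb R_in_HA[OF A d v]] .
    show "R d (adj H (\<H> A) x v) \<in> \<H> A" using R_in_HA[OF A d bop_in[OF xsb v]] .
    fix w assume w: "w \<in> \<H> A"
    have "ip w (adj H (\<H> A) x (R d v)) = ip (x w) (R d v)"
      using adj_ip[OF K xb w R_in_HA[OF A d v]] by simp
    also have "\<dots> = ip (R (st d) (x w)) v" using R_adj[of "st d" "x w" v] by simp
    also have "\<dots> = ip (x (R (st d) w)) v" using rcomm_commute[OF x subalg_st[OF A d] w] by simp
    also have "\<dots> = ip (R (st d) w) (adj H (\<H> A) x v)"
      using adj_ip[OF K xb R_in_HA[OF A subalg_st[OF A d] w] v] .
    also have "\<dots> = ip w (R d (adj H (\<H> A) x v))" using R_adj[of "st d" w] by simp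
    finally show "ip w (adj H (\<H> A) x (R d v)) = ip w (R d (adj H (\<H> A) x v))" .
  qed
qed

lemma ip_R_R_retraction:
  assumes A: "subalg P A" and E: "retraction P A E" and v: "v \<in> \<H> A" and w: "w \<in> \<H> A"
  shows "ip (R b v) (R b w) = ip (R (E (b * st b)) v) w"
proof -
  have "ip (R b v) (R b w) = ip (R (st b) (R b v)) w" using R_adj[of "st b" "R b v" w] by simp
  also have "\<dots> = ip (R (b * st b) v) w" by (simp add: R_R)
  also have "\<dots> = ip (R (E (b * st b)) v) w" using ip_R_retraction[OF A E v w] .
  finally show ?thesis .
qed

lemma rcomm_symmetric_R:
  assumes A: "subalg P A" and E: "retraction P A E" and S: "S \<in> rcomm A"
    and sym: "\<And>v w. v \<in> \<H> A \<Longrightarrow> w \<in> \<H> A \<Longrightarrow> ip (S v) w = ip v (S w)"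
    and v: "v \<in> \<H> A" and w: "w \<in> \<H> A"
  shows "ip (R b (S v)) (R b w) = ip (R b v) (R b (S w))"
proof -
  define d where "d = E (b * st b)"
  have d: "d \<in> A" unfolding d_def using retraction_in[OF E] .
  have Sb: "bop H (\<H> A) S" using rcomm_bop[OF S] .
  have "ip (R b (S v)) (R b w) = ip (R d (S v)) w"
    unfolding d_def using ip_R_R_retraction[OF A E bop_in[OF Sb v] w] .
  also have "\<dots> = ip (S (R d v)) w" using rcomm_commute[OF S d v] by simp
  also have "\<dots> = ip (R d v) (S w)" using sym[OF R_in_HA[OF A d v] w] .
  also have "\<dots> = ip (R b v) (R b (S w))"
    unfolding d_def using ip_R_R_retraction[OF A E v bop_in[OF Sb w]] by simp
  finally show ?thesis .
qed

text \<open>This is where the retraction onto \<open>A\<close> enters: it makes \<open>x\<^sup>* x\<close>, which only commutes with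
  the right multiplications by elements of \<open>A\<close>, symmetric for all the forms
  \<open>ip (R b u) (R b w)\<close>, so that \<open>power_iteration_bound\<close> applies.\<close>
lemma R_vector_bounded:
  assumes A: "subalg P A" and E: "retraction P A E" and x: "x \<in> rcomm A"
  shows "\<exists>C. \<forall>b. nm (R b (x \<Omega>)) \<le> C * nm (G b)"
proof -
  have K: "closed_subspace (\<H> A)" using closed_subspace_HA[OF A] .
  have xb: "bop H (\<H> A) x" using rcomm_bop[OF x] .
  have OmA: "\<Omega> \<in> \<H> A" using Omega_in_HA[OF A] .
  define S where "S = adj H (\<H> A) x \<circ> x"
  have S: "S \<in> rcomm A" unfolding S_def using rcomm_comp[OF A rcomm_adj[OF A x] x] .
  have Sb: "bop H (\<H> A) S" using rcomm_bop[OF S] .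
  have xx: "ip (x v) (x w) = ip v (S w)" if "v \<in> \<H> A" "w \<in> \<H> A" for v w
    unfolding S_def using adj_ip[OF K xb that(1) bop_in[OF xb that(2)]] by simp
  have sym: "ip (S v) w = ip v (S w)" if "v \<in> \<H> A" "w \<in> \<H> A" for v w
  proof -
    have "ip (S v) w = cnj (ip w (S v))" by (rule ip_swap)
    also have "\<dots> = cnj (ip (x w) (x v))" using xx[OF that(2,1)] by simp
    also have "\<dots> = ip (x v) (x w)" by (simp add: ip_swap[of "x v"])
    finally show ?thesis using xx[OF that] by simp
  qed
  obtain CS where CS: "CS > 0" "\<And>u. u \<in> \<H> A \<Longrightarrow> nm (S u) \<le> CS * nm u" using bop_bound[OF Sb] by blast
  have "nm (R b (x \<Omega>)) \<le> sqrt CS * nm (G b)" for b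
  proof -
    define d where "d = E (b * st b)"
    have d: "d \<in> A" unfolding d_def using retraction_in[OF E] .
    have "(nm (R b (x \<Omega>)))^2 = Re (ip (R b (x \<Omega>)) (R b (x \<Omega>)))" by (rule nm_sq)
    also have "ip (R b (x \<Omega>)) (R b (x \<Omega>)) = ip (R d (x \<Omega>)) (x \<Omega>)"
      unfolding d_def using ip_R_R_retraction[OF A E bop_in[OF xb OmA] bop_in[OF xb OmA]] .
    also have "\<dots> = ip (x (R d \<Omega>)) (x \<Omega>)" using rcomm_commute[OF x d OmA] by simp
    also have "\<dots> = ip (R d \<Omega>) (S \<Omega>)" using xx[OF R_in_HA[OF A d OmA] OmA] .
    also have "\<dots> = ip (R b \<Omega>) (R b (S \<Omega>))"
      unfolding d_def using ip_R_R_retraction[OF A E OmA bop_in[OF Sb OmA]] by simp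
    also have "Re (ip (R b \<Omega>) (R b (S \<Omega>))) \<le> cmod (ip (R b \<Omega>) (R b (S \<Omega>)))"
      by (rule complex_Re_le_cmod)
    also have "\<dots> \<le> nm (R b \<Omega>) * nm (R b (S \<Omega>))" by (rule cauchy_schwarz)
    also have "\<dots> \<le> nm (R b \<Omega>) * (CS * nm (R b \<Omega>))"
      using power_iteration_bound[OF Sb R_bop rcomm_symmetric_R[OF A E S sym] CS OmA]
      by (simp add: mult_left_mono)
    finally have "(nm (R b (x \<Omega>)))^2 \<le> CS * (nm (G b))^2"
      by (simp add: R_Omega power2_eq_square mult.commute mult.left_commute)
    then have "sqrt ((nm (R b (x \<Omega>)))^2) \<le> sqrt (CS * (nm (G b))^2)" by (rule real_sqrt_le_mono)
    then show ?thesis by (simp add: real_sqrt_mult)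
  qed
  then show ?thesis by blast
qed

lemma R_add: "R (a + b) v = R a v + R b v"
proof -
  have "R (a + b) = (\<lambda>v. R a v + R b v)"
    by (rule bop_UNIV_eqI[OF R_bop bop_plus[OF subspace_UNIV R_bop R_bop]]) (simp add: R_G distrib_left G_add)
  then show ?thesis by simp
qed

lemma R_as: "R (as c a) v = sc c (R a v)"
proof -
  have "R (as c a) = (\<lambda>v. sc c (R a v))"
    by (rule bop_UNIV_eqI[OF R_bop bop_scal[OF subspace_UNIV R_bop]]) (simp add: R_G as_mult_right[symmetric] G_as)
  then show ?thesis by simp
qed

lemma iota_exists:
  assumes A: "subalg P A" and E: "retraction P A E" and x: "x \<in> rcomm A"
  shows "\<exists>T. bop H UNIV T \<and> (\<forall>b. T (G b) = R b (x \<Omega>))"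
proof -
  obtain C where C: "\<forall>b. nm (R b (x \<Omega>)) \<le> C * nm (G b)" using R_vector_bounded[OF A E x] by blast
  define f where "f v = R (inv G v) (x \<Omega>)" for v
  have "\<exists>T. bop H (hcl H (range G)) T \<and> (\<forall>v\<in>range G. T v = f v)"
  proof (rule bop_extension[OF subspace_range_G])
    show "f (v + w) = f v + f w" if "v \<in> range G" "w \<in> range G" for v w
      using that unfolding f_def by (auto simp: G_add[symmetric] R_add)
    show "f (sc c v) = sc c (f v)" if "v \<in> range G" for c v
      using that unfolding f_def by (auto simp: G_as[symmetric] R_as)
    show "nm (f v) \<le> C * nm v" if "v \<in> range G" for v
      using that C unfolding f_def by auto
    show "f v \<in> hcl H (range G)" for v using dense by simp
  qed
  then show ?thesis using dense unfolding f_def by auto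
qed

lemma iota_char:
  assumes A: "subalg P A" and E: "retraction P A E" and x: "x \<in> vN H G A"
  shows "bop H UNIV (\<iota> A x) \<and> (\<forall>b. \<iota> A x (G b) = R b (x \<Omega>))"
proof -
  have xR: "x \<in> rcomm A" using vN_subset_rcomm[OF A x] .
  obtain T where T: "bop H UNIV T" "\<forall>b. T (G b) = R b (x \<Omega>)" using iota_exists[OF A E xR] by blast
  have key: "J (L (st b) (adj H (\<H> A) x \<Omega>)) = R b (x \<Omega>)" for b
    using adj_Omega_eq_J[OF A xR] J_L_J[of "st b" "x \<Omega>"] by simp
  have "\<iota> A x = T" unfolding iota_def
  proof (rule the_equality)
    show "bop H (\<H> UNIV) T \<and> (\<forall>b\<in>UNIV. T (G b) = J (L (st b) (adj H (\<H> A) x \<Omega>)))"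
      using T key by simp
    fix T' assume "bop H (\<H> UNIV) T' \<and> (\<forall>b\<in>UNIV. T' (G b) = J (L (st b) (adj H (\<H> A) x \<Omega>)))"
    then have "bop H UNIV T'" "\<forall>b. T' (G b) = R b (x \<Omega>)" using key by auto
    then show "T' = T" using bop_UNIV_eqI[OF _ T(1)] T(2) by simp
  qed
  then show ?thesis using T by simp
qed

lemma bop_iota: "subalg P A \<Longrightarrow> retraction P A E \<Longrightarrow> x \<in> vN H G A \<Longrightarrow> bop H UNIV (\<iota> A x)"
  using iota_char by blast
lemma iota_G: "subalg P A \<Longrightarrow> retraction P A E \<Longrightarrow> x \<in> vN H G A \<Longrightarrow> \<iota> A x (G b) = R b (x \<Omega>)"
  using iota_char by blast

lemma bop_M: "y \<in> M \<Longrightarrow> bop H UNIV y" using vN_bop[of y UNIV] by simp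
lemma M_R_commute: "y \<in> M \<Longrightarrow> y (R a v) = R a (y v)" using vN_R_commute[OF subalg_UNIV, of y a v] by simp

lemma in_M_I: "bop H UNIV T \<Longrightarrow> (\<And>a v. T (R a v) = R a (T v)) \<Longrightarrow> T \<in> M"
  using rcomm_subset_vN[OF subalg_UNIV, of T] unfolding rcomm_def by simp

lemma iota_in_M:
  assumes A: "subalg P A" and E: "retraction P A E" and x: "x \<in> vN H G A"
  shows "\<iota> A x \<in> M"
proof (rule in_M_I[OF bop_iota[OF A E x]])
  fix a v
  have "\<iota> A x \<circ> R a = R a \<circ> \<iota> A x"
  proof (rule bop_UNIV_eqI)
    show "bop H UNIV (\<iota> A x \<circ> R a)" using bop_comp[OF subspace_UNIV bop_iota[OF A E x] R_bop] .
    show "bop H UNIV (R a \<circ> \<iota> A x)" using bop_comp[OF subspace_UNIV R_bop bop_iota[OF A E x]] .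
    fix b show "(\<iota> A x \<circ> R a) (G b) = (R a \<circ> \<iota> A x) (G b)"
      by (simp add: R_G iota_G[OF A E x] R_R)
  qed
  then show "\<iota> A x (R a v) = R a (\<iota> A x v)" by (metis comp_apply)
qed

lemma iota_HA:
  assumes A: "subalg P A" and E: "retraction P A E" and x: "x \<in> vN H G A" and v: "v \<in> \<H> A"
  shows "\<iota> A x v = x v"
proof -
  have "x v = \<iota> A x v"
  proof (rule bop_HA_eq_restrict[OF A vN_bop[OF x] bop_iota[OF A E x] _ v])
    fix a assume a: "a \<in> A"
    have "x (G a) = x (R a \<Omega>)" by (simp add: R_Omega)
    also have "\<dots> = R a (x \<Omega>)" using vN_R_commute[OF A x a Omega_in_HA[OF A]] .
    finally show "x (G a) = \<iota> A x (G a)" using iota_G[OF A E x] by simp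
  qed
  then show ?thesis by simp
qed

lemma iota_Omega: "subalg P A \<Longrightarrow> retraction P A E \<Longrightarrow> x \<in> vN H G A \<Longrightarrow> \<iota> A x \<Omega> = x \<Omega>"
  using iota_HA Omega_in_HA by blast

lemma iota_lam:
  assumes A: "subalg P A" and E: "retraction P A E" and a: "a \<in> A"
  shows "\<iota> A (lam H G A a) = L a"
proof (rule bop_UNIV_eqI[OF bop_iota[OF A E lam_vN[OF A a]] L_bop])
  fix b
  have "lam H G A a \<Omega> = G a" using lam_G[OF A a subalg_one[OF A]] by simp
  then show "\<iota> A (lam H G A a) (G b) = L a (G b)"
    using iota_G[OF A E lam_vN[OF A a]] by (simp add: R_G L_G)
qed

lemma ip_iota_G:
  assumes A: "subalg P A" and E: "retraction P A E" and x: "x \<in> vN H G A" and a: "a \<in> A"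
  shows "ip (\<iota> A x u) (G a) = ip u (R a (J (x \<Omega>)))"
proof (rule eq_on_hcl_scalar[of "range G" "\<lambda>u. ip (\<iota> A x u) (G a)" "\<lambda>u. ip u (R a (J (x \<Omega>)))"])
  show "(\<lambda>n. ip (\<iota> A x (X n)) (G a)) \<longlonglongrightarrow> ip (\<iota> A x y) (G a)" if "\<And>n. X n \<in> range G" "hconv H X y" for X y
    using ip_hconv_bop_left[OF bop_iota[OF A E x] that(2)] .
  show "(\<lambda>n. ip (X n) (R a (J (x \<Omega>)))) \<longlonglongrightarrow> ip y (R a (J (x \<Omega>)))" if "\<And>n. X n \<in> range G" "hconv H X y" for X y
    using ip_hconv_left[OF that(2)] .
  show "u \<in> hcl H (range G)" using dense_G .
  fix d assume "d \<in> range G"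
  then obtain b where b: "d = G b" by blast
  define \<xi> where "\<xi> = x \<Omega>"
  have "ip (\<iota> A x (G b)) (G a) = ip (R b \<xi>) (G a)" unfolding \<xi>_def using iota_G[OF A E x] by simp
  also have "\<dots> = ip \<xi> (R (st b) (G a))" by (rule R_adj)
  also have "\<dots> = ip \<xi> (G (a * st b))" by (simp add: R_G)
  finally have l: "ip (\<iota> A x (G b)) (G a) = ip \<xi> (G (a * st b))" .
  have "ip (G b) (R a (J \<xi>)) = ip (R (st a) (G b)) (J \<xi>)" using R_adj[of "st a" "G b" "J \<xi>"] by simp
  also have "\<dots> = ip (G (b * st a)) (J \<xi>)" by (simp add: R_G)
  also have "\<dots> = ip (J (J (G (b * st a)))) (J \<xi>)" by (simp add: J_J)
  also have "\<dots> = ip \<xi> (J (G (b * st a)))" by (rule J_ip)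
  also have "\<dots> = ip \<xi> (G (a * st b))" by (simp add: J_G st_mult)
  finally show "ip (\<iota> A x d) (G a) = ip d (R a (J (x \<Omega>)))" using l b unfolding \<xi>_def by simp
qed

text \<open>By \<open>ip_iota_G\<close>, \<open>\<iota> A x\<close> maps the orthogonal complement of \<open>\<H> A\<close> into itself.\<close>
lemma jones_iota:
  assumes A: "subalg P A" and E: "retraction P A E" and x: "x \<in> vN H G A"
  shows "jones A (\<iota> A x v) = \<iota> A x (jones A v)"
proof -
  have K: "closed_subspace (\<H> A)" using closed_subspace_HA[OF A] .
  define w where "w = v - jones A v"
  have worth: "ip w k = 0" if "k \<in> \<H> A" for k unfolding w_def using proj_orth[OF K that] .
  have xiA: "J (x \<Omega>) \<in> \<H> A" using J_in_HA[OF A bop_in[OF vN_bop[OF x] Omega_in_HA[OF A]]] .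
  have "jones A (\<iota> A x w) = 0"
  proof (rule proj_eq_0I[OF K])
    fix k assume k: "k \<in> \<H> A"
    show "ip (\<iota> A x w) k = 0"
    proof (rule eq_on_hcl_scalar[of "G ` A" "ip (\<iota> A x w)" "\<lambda>_. 0"])
      show "(\<lambda>n. ip (\<iota> A x w) (X n)) \<longlonglongrightarrow> ip (\<iota> A x w) y" if "\<And>n. X n \<in> G ` A" "hconv H X y" for X y
        using ip_hconv_right[OF that(2)] .
      show "k \<in> hcl H (G ` A)" using k unfolding HA_def .
      fix d assume "d \<in> G ` A"
      then obtain a where a: "a \<in> A" "d = G a" by blast
      show "ip (\<iota> A x w) d = 0"
        using ip_iota_G[OF A E x a(1), of w] worth[OF R_in_HA[OF A a(1) xiA]] a(2) by simp
    qed simp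
  qed
  have vw: "v = jones A v + w" unfolding w_def by simp
  have "\<iota> A x v = \<iota> A x (jones A v) + \<iota> A x w"
    using bop_add[OF bop_iota[OF A E x], of "jones A v" w] vw by simp
  then have "jones A (\<iota> A x v) = jones A (\<iota> A x (jones A v)) + jones A (\<iota> A x w)" using proj_add[OF K] by simp
  also have "\<iota> A x (jones A v) = x (jones A v)" using iota_HA[OF A E x proj_in[OF K]] .
  also have "jones A (x (jones A v)) = x (jones A v)" using proj_id[OF K bop_in[OF vN_bop[OF x] proj_in[OF K]]] .
  finally show ?thesis using \<open>jones A (\<iota> A x w) = 0\<close> iota_HA[OF A E x proj_in[OF K]] by simp
qed

subsection \<open>The conditional expectation as a compression\<close>

text \<open>The compression \<open>e_A y e_A\<close>, as an operator on \<open>\<H> A\<close>; like \<open>cexp\<close> it is \<open>0\<close> off \<open>M\<close>.\<close>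
definition compress :: "'a set \<Rightarrow> ('h \<Rightarrow> 'h) \<Rightarrow> ('h \<Rightarrow> 'h)" where
  "compress A y = (if y \<in> M then (\<lambda>v. if v \<in> \<H> A then jones A (y v) else 0) else (\<lambda>_. 0))"

lemma compress_HA: "y \<in> M \<Longrightarrow> v \<in> \<H> A \<Longrightarrow> compress A y v = jones A (y v)" unfolding compress_def by simp
lemma compress_outside: "v \<notin> \<H> A \<Longrightarrow> compress A y v = 0" unfolding compress_def by simp

lemma bop_compress:
  assumes A: "subalg P A" and y: "y \<in> M"
  shows "bop H (\<H> A) (compress A y)"
  unfolding bop_def
proof (intro conjI ballI allI impI)
  have K: "closed_subspace (\<H> A)" using closed_subspace_HA[OF A] .
  have S: "subspace (\<H> A)" using subspace_HA[OF A] .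
  have yb: "bop H UNIV y" using bop_M[OF y] .
  show "compress A y x \<in> \<H> A" if "x \<in> \<H> A" for x using that proj_in[OF K] compress_HA[OF y] by simp
  show "compress A y x = 0" if "x \<notin> \<H> A" for x using that compress_outside by simp
  show "compress A y (x + z) = compress A y x + compress A y z" if "x \<in> \<H> A" "z \<in> \<H> A" for x z
    using that compress_HA[OF y] subspace_add[OF S that] bop_add[OF yb] proj_add[OF K] by simp
  show "compress A y (sc c x) = sc c (compress A y x)" if "x \<in> \<H> A" for c x
    using that compress_HA[OF y] subspace_sc[OF S that] bop_sc[OF yb] proj_sc[OF K] by simp
  obtain C where C: "C > 0" "\<And>x. x \<in> UNIV \<Longrightarrow> nm (y x) \<le> C * nm x" using bop_bound[OF yb] by blast
  show "\<exists>C. \<forall>x\<in>\<H> A. nm (compress A y x) \<le> C * nm x"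
  proof (intro exI ballI)
    fix x assume x: "x \<in> \<H> A"
    have "nm (compress A y x) = nm (jones A (y x))" using compress_HA[OF y x] by simp
    also have "\<dots> \<le> nm (y x)" by (rule proj_nm_le[OF K])
    also have "\<dots> \<le> C * nm x" using C(2) by simp
    finally show "nm (compress A y x) \<le> C * nm x" .
  qed
qed

lemma compress_in_vN:
  assumes A: "subalg P A" and E: "retraction P A E" and y: "y \<in> M"
  shows "compress A y \<in> vN H G A"
proof (rule rcomm_subset_vN[OF A])
  show "compress A y \<in> rcomm A" unfolding rcomm_def
  proof (intro CollectI conjI ballI)
    show "bop H (\<H> A) (compress A y)" using bop_compress[OF A y] .
    fix a v assume a: "a \<in> A" and v: "v \<in> \<H> A"
    have "compress A y (R a v) = jones A (y (R a v))" using compress_HA[OF y R_in_HA[OF A a v]] .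
    also have "\<dots> = jones A (R a (y v))" using M_R_commute[OF y] by simp
    also have "\<dots> = R a (jones A (y v))" using jones_R[OF A E a] .
    also have "\<dots> = R a (compress A y v)" using compress_HA[OF y v] by simp
    finally show "compress A y (R a v) = R a (compress A y v)" .
  qed
qed

lemma compress_iota:
  assumes A: "subalg P A" and E: "retraction P A E" and x: "x \<in> vN H G A"
  shows "compress A (\<iota> A x) = x"
proof
  fix v
  have K: "closed_subspace (\<H> A)" using closed_subspace_HA[OF A] .
  show "compress A (\<iota> A x) v = x v"
  proof (cases "v \<in> \<H> A")
    case True
    then show ?thesis using compress_HA[OF iota_in_M[OF A E x] True] iota_HA[OF A E x True]
        proj_id[OF K bop_in[OF vN_bop[OF x] True]] by simp
  next
    case False
    then show ?thesis using compress_outside bop_out[OF vN_bop[OF x]] by simp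
  qed
qed

lemma M_add: "y1 \<in> M \<Longrightarrow> y2 \<in> M \<Longrightarrow> (\<lambda>v. y1 v + y2 v) \<in> M" using vN_add[OF subalg_UNIV] .
lemma M_sc: "y \<in> M \<Longrightarrow> (\<lambda>v. sc c (y v)) \<in> M" using vN_sc[OF subalg_UNIV] .
lemma M_comp: "y1 \<in> M \<Longrightarrow> y2 \<in> M \<Longrightarrow> y1 \<circ> y2 \<in> M" using vN_comp[OF subalg_UNIV] .
lemma L_in_M: "L a \<in> M" using lam_vN[OF subalg_UNIV] by simp

lemma compress_add:
  assumes A: "subalg P A" and y1: "y1 \<in> M" and y2: "y2 \<in> M"
  shows "compress A (\<lambda>v. y1 v + y2 v) = (\<lambda>v. compress A y1 v + compress A y2 v)"
proof
  fix v
  have K: "closed_subspace (\<H> A)" using closed_subspace_HA[OF A] .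
  show "compress A (\<lambda>v. y1 v + y2 v) v = compress A y1 v + compress A y2 v"
    by (cases "v \<in> \<H> A") (simp_all add: compress_HA[OF M_add[OF y1 y2]] compress_HA[OF y1] compress_HA[OF y2] compress_outside proj_add[OF K])
qed

lemma compress_sc:
  assumes A: "subalg P A" and y: "y \<in> M"
  shows "compress A (\<lambda>v. sc c (y v)) = (\<lambda>v. sc c (compress A y v))"
proof
  fix v
  have K: "closed_subspace (\<H> A)" using closed_subspace_HA[OF A] .
  show "compress A (\<lambda>v. sc c (y v)) v = sc c (compress A y v)"
    by (cases "v \<in> \<H> A") (simp_all add: compress_HA[OF M_sc[OF y]] compress_HA[OF y] compress_outside proj_sc[OF K])
qed

lemma compress_bimodule:
  assumes A: "subalg P A" and E: "retraction P A E" and x: "x \<in> vN H G A" and z: "z \<in> vN H G A"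
    and y: "y \<in> M"
  shows "compress A (\<iota> A x \<circ> y \<circ> \<iota> A z) = x \<circ> compress A y \<circ> z"
proof
  fix v
  have K: "closed_subspace (\<H> A)" using closed_subspace_HA[OF A] .
  have S: "subspace (\<H> A)" using subspace_HA[OF A] .
  have mem: "\<iota> A x \<circ> y \<circ> \<iota> A z \<in> M" using M_comp[OF M_comp[OF iota_in_M[OF A E x] y] iota_in_M[OF A E z]] .
  show "compress A (\<iota> A x \<circ> y \<circ> \<iota> A z) v = (x \<circ> compress A y \<circ> z) v"
  proof (cases "v \<in> \<H> A")
    case True
    have zv: "z v \<in> \<H> A" using bop_in[OF vN_bop[OF z] True] .
    have "compress A (\<iota> A x \<circ> y \<circ> \<iota> A z) v = jones A (\<iota> A x (y (\<iota> A z v)))" using compress_HA[OF mem True] by simp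
    also have "\<dots> = \<iota> A x (jones A (y (z v)))" using jones_iota[OF A E x] iota_HA[OF A E z True] by simp
    also have "\<dots> = x (jones A (y (z v)))" using iota_HA[OF A E x proj_in[OF K]] .
    also have "\<dots> = (x \<circ> compress A y \<circ> z) v" using compress_HA[OF y zv] by simp
    finally show ?thesis .
  next
    case False
    have z0: "z v = 0" using bop_out[OF vN_bop[OF z] False] .
    have "compress A y 0 = jones A (y 0)" using compress_HA[OF y subspace_zero[OF S]] .
    also have "y 0 = 0" using bop_zero[OF subspace_UNIV bop_M[OF y]] .
    also have "jones A 0 = 0" using proj_id[OF K subspace_zero[OF S]] .
    finally have "x (compress A y (z v)) = 0" using z0 bop_zero[OF S vN_bop[OF x]] by simp
    then show ?thesis using compress_outside[OF False] by simp
  qed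
qed

lemma compress_positive:
  assumes A: "subalg P A" and y: "y \<in> M"
  shows "Im (ip (compress A (adj H (\<H> UNIV) y \<circ> y) v) v) = 0 \<and> Re (ip (compress A (adj H (\<H> UNIV) y \<circ> y) v) v) \<ge> 0"
proof (cases "(adj H (\<H> UNIV) y \<circ> y) \<in> M \<and> v \<in> \<H> A")
  case True
  have K: "closed_subspace (\<H> A)" using closed_subspace_HA[OF A] .
  have yb: "bop H UNIV y" using bop_M[OF y] .
  have e1: "compress A (adj H (\<H> UNIV) y \<circ> y) v = jones A (adj H UNIV y (y v))"
    using compress_HA[of "adj H (\<H> UNIV) y \<circ> y" v A] True by simp
  have "ip (compress A (adj H (\<H> UNIV) y \<circ> y) v) v = ip (jones A (adj H UNIV y (y v))) v"
    unfolding e1 ..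
  also have "\<dots> = ip (adj H UNIV y (y v)) (jones A v)" using proj_self_adjoint[OF K] .
  also have "jones A v = v" using proj_id[OF K] True by simp
  also have "ip (adj H UNIV y (y v)) v = ip (y v) (y v)" using adj_ip2[OF closed_subspace_UNIV yb] by simp
  finally have X: "ip (compress A (adj H (\<H> UNIV) y \<circ> y) v) v = ip (y v) (y v)" .
  show ?thesis unfolding X using ip_self_nonneg[of "y v"] by simp
next
  case False
  then have "compress A (adj H (\<H> UNIV) y \<circ> y) v = 0" unfolding compress_def by auto
  then show ?thesis by simp
qed

lemma compress_trace:
  assumes A: "subalg P A" and y: "y \<in> M"
  shows "ip (compress A y \<Omega>) \<Omega> = ip (y \<Omega>) \<Omega>"
  using compress_HA[OF y Omega_in_HA[OF A]] proj_ip_left[OF closed_subspace_HA[OF A] Omega_in_HA[OF A]] by simp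

lemma compress_lam:
  assumes A: "subalg P A" and E: "retraction P A E"
  shows "compress A (L b) = lam H G A (E b)"
proof (rule bop_HA_eqI[OF A bop_compress[OF A L_in_M] lam_bop[OF A retraction_in[OF E]]])
  fix a assume a: "a \<in> A"
  have "compress A (L b) (G a) = jones A (G (b * a))" using compress_HA[OF L_in_M G_in_HA[OF a]] by (simp add: L_G)
  also have "\<dots> = G (E b * a)" using jones_G[OF A E] retraction_right[OF A E a] by simp
  also have "\<dots> = lam H G A (E b) (G a)" using lam_G[OF A retraction_in[OF E] a] by simp
  finally show "compress A (L b) (G a) = lam H G A (E b) (G a)" .
qed

definition is_cexp :: "'a set \<Rightarrow> ('a \<Rightarrow> 'a) \<Rightarrow> (('h \<Rightarrow> 'h) \<Rightarrow> ('h \<Rightarrow> 'h)) \<Rightarrow> bool" where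
  "is_cexp A EA E \<longleftrightarrow>
     (\<forall>y. y \<notin> vN H G UNIV \<longrightarrow> E y = (\<lambda>_. 0)) \<and>
     (\<forall>y\<in>vN H G UNIV. E y \<in> vN H G A) \<and>
     (\<forall>x\<in>vN H G A. E (iota P H G A UNIV x) = x) \<and>
     (\<forall>y1\<in>vN H G UNIV. \<forall>y2\<in>vN H G UNIV. E (\<lambda>v. y1 v + y2 v) = (\<lambda>v. E y1 v + E y2 v)) \<and>
     (\<forall>c. \<forall>y\<in>vN H G UNIV. E (\<lambda>v. hsc H c (y v)) = (\<lambda>v. hsc H c (E y v))) \<and>
     (\<forall>x\<in>vN H G A. \<forall>z\<in>vN H G A. \<forall>y\<in>vN H G UNIV.
        E (iota P H G A UNIV x \<circ> y \<circ> iota P H G A UNIV z) = x \<circ> E y \<circ> z) \<and>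
     (\<forall>y\<in>vN H G UNIV. \<forall>v. Im (hip H (E (adj H (HA H G UNIV) y \<circ> y) v) v) = 0 \<and>
                         Re (hip H (E (adj H (HA H G UNIV) y \<circ> y) v) v) \<ge> 0) \<and>
     (\<forall>y\<in>vN H G UNIV. hip H (E y (G 1)) (G 1) = hip H (y (G 1)) (G 1)) \<and>
     (\<forall>b\<in>UNIV. E (lam H G UNIV b) = lam H G A (EA b))"

lemma cexp_eq_the_is_cexp: "cexp P H G A UNIV EA = (THE E. is_cexp A EA E)"
  unfolding cexp_def is_cexp_def by simp

lemma is_cexp_compress:
  assumes A: "subalg P A" and E: "retraction P A E"
  shows "is_cexp A E (compress A)"
  unfolding is_cexp_def
proof (intro conjI ballI allI)
  show "y \<notin> M \<longrightarrow> compress A y = (\<lambda>_. 0)" for y unfolding compress_def by simp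
  show "compress A y \<in> vN H G A" if "y \<in> M" for y using compress_in_vN[OF A E that] .
  show "compress A (\<iota> A x) = x" if "x \<in> vN H G A" for x using compress_iota[OF A E that] .
  show "compress A (\<lambda>v. y1 v + y2 v) = (\<lambda>v. compress A y1 v + compress A y2 v)" if "y1 \<in> M" "y2 \<in> M" for y1 y2
    using compress_add[OF A that] .
  show "compress A (\<lambda>v. sc c (y v)) = (\<lambda>v. sc c (compress A y v))" if "y \<in> M" for c y
    using compress_sc[OF A that] .
  show "compress A (\<iota> A x \<circ> y \<circ> \<iota> A z) = x \<circ> compress A y \<circ> z"
    if "x \<in> vN H G A" "z \<in> vN H G A" "y \<in> M" for x z y using compress_bimodule[OF A E that] .
  show "Im (ip (compress A (adj H (\<H> UNIV) y \<circ> y) v) v) = 0" if "y \<in> M" for y v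
    using compress_positive[OF A that] by blast
  show "Re (ip (compress A (adj H (\<H> UNIV) y \<circ> y) v) v) \<ge> 0" if "y \<in> M" for y v
    using compress_positive[OF A that] by blast
  show "ip (compress A y \<Omega>) \<Omega> = ip (y \<Omega>) \<Omega>" if "y \<in> M" for y using compress_trace[OF A that] .
  show "compress A (L b) = lam H G A (E b)" for b using compress_lam[OF A E] .
qed

text \<open>Only bimodularity and trace preservation are needed:
  \<open>ip (F y (G a)) (G c) = \<tau> (F (\<lambda>(c\<^sup>*) y \<lambda>(a))) = \<tau> (\<lambda>(c\<^sup>*) y \<lambda>(a)) = ip (y (G a)) (G c)\<close>.\<close>
lemma is_cexp_matrix_coeff:
  assumes A: "subalg P A" and E: "retraction P A EA" and C: "is_cexp A EA F" and y: "y \<in> M"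
    and a: "a \<in> A" and c: "c \<in> A"
  shows "ip (F y (G a)) (G c) = ip (y (G a)) (G c)"
proof -
  have Fv: "\<forall>y\<in>M. F y \<in> vN H G A" using C unfolding is_cexp_def by blast
  have Fb: "\<forall>x\<in>vN H G A. \<forall>z\<in>vN H G A. \<forall>y\<in>M. F (\<iota> A x \<circ> y \<circ> \<iota> A z) = x \<circ> F y \<circ> z"
    using C unfolding is_cexp_def by blast
  have Ft: "\<forall>y\<in>M. ip (F y \<Omega>) \<Omega> = ip (y \<Omega>) \<Omega>" using C unfolding is_cexp_def by blast
  define la where "la = lam H G A a"
  define lc where "lc = lam H G A (st c)"
  have laV: "la \<in> vN H G A" unfolding la_def using lam_vN[OF A a] .
  have lcV: "lc \<in> vN H G A" unfolding lc_def using lam_vN[OF A subalg_st[OF A c]] .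
  have iola: "\<iota> A la = L a" unfolding la_def using iota_lam[OF A E a] .
  have iolc: "\<iota> A lc = L (st c)" unfolding lc_def using iota_lam[OF A E subalg_st[OF A c]] .
  have mem: "L (st c) \<circ> y \<circ> L a \<in> M" using M_comp[OF M_comp[OF L_in_M y] L_in_M] .
  have "F (L (st c) \<circ> y \<circ> L a) = lc \<circ> F y \<circ> la" using Fb laV lcV y iola iolc by metis
  then have "ip ((lc \<circ> F y \<circ> la) \<Omega>) \<Omega> = ip ((L (st c) \<circ> y \<circ> L a) \<Omega>) \<Omega>" using Ft mem by metis
  moreover have "la \<Omega> = G a" unfolding la_def using lam_G[OF A a subalg_one[OF A]] by simp
  moreover have "F y (G a) \<in> \<H> A" using bop_in[OF vN_bop[OF bspec[OF Fv y]] G_in_HA[OF a]] .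
  ultimately have "ip (lc (F y (G a))) \<Omega> = ip (L (st c) (y (G a))) \<Omega>" by (simp add: L_Omega)
  moreover have "lc (F y (G a)) = L (st c) (F y (G a))"
    unfolding lc_def using lam_eq_L[OF A subalg_st[OF A c] \<open>F y (G a) \<in> \<H> A\<close>] .
  ultimately have "ip (L (st c) (F y (G a))) \<Omega> = ip (L (st c) (y (G a))) \<Omega>" by simp
  then show ?thesis using L_adj[of "st c"] by (simp add: L_Omega)
qed

lemma is_cexp_unique:
  assumes A: "subalg P A" and E: "retraction P A EA" and C1: "is_cexp A EA F1" and C2: "is_cexp A EA F2"
  shows "F1 = F2"
proof
  fix y
  show "F1 y = F2 y"
  proof (cases "y \<in> M")
    case False
    then show ?thesis using C1 C2 unfolding is_cexp_def by simp
  next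
    case True
    have V1: "F1 y \<in> vN H G A" using C1 True unfolding is_cexp_def by blast
    have V2: "F2 y \<in> vN H G A" using C2 True unfolding is_cexp_def by blast
    show ?thesis
    proof (rule bop_HA_eqI[OF A vN_bop[OF V1] vN_bop[OF V2]])
      fix a assume a: "a \<in> A"
      show "F1 y (G a) = F2 y (G a)"
      proof (rule eq_by_ip_dense[OF subspace_G_image[OF A]])
        show "F1 y (G a) \<in> hcl H (G ` A)" using bop_in[OF vN_bop[OF V1] G_in_HA[OF a]] unfolding HA_def .
        show "F2 y (G a) \<in> hcl H (G ` A)" using bop_in[OF vN_bop[OF V2] G_in_HA[OF a]] unfolding HA_def .
        fix d assume "d \<in> G ` A"
        then obtain c where c: "c \<in> A" "d = G c" by blast
        show "ip (F1 y (G a)) d = ip (F2 y (G a)) d"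
          using is_cexp_matrix_coeff[OF A E C1 True a c(1)] is_cexp_matrix_coeff[OF A E C2 True a c(1)] c(2) by simp
      qed
    qed
  qed
qed

lemma cexp_eq_compress:
  assumes A: "subalg P A" and E: "retraction P A E"
  shows "cexp P H G A UNIV E = compress A"
  unfolding cexp_eq_the_is_cexp
proof (rule the_equality)
  show "is_cexp A E (compress A)" by (rule is_cexp_compress[OF A E])
  fix F assume "is_cexp A E F"
  then show "F = compress A" by (rule is_cexp_unique[OF A E _ is_cexp_compress[OF A E]])
qed

lemma Omega_separating_M:
  assumes T: "T \<in> M" and S: "S \<in> M" and e: "T \<Omega> = S \<Omega>"
  shows "T = S"
proof (rule bop_UNIV_eqI[OF bop_M[OF T] bop_M[OF S]])
  fix b
  have "T (G b) = T (R b \<Omega>)" by (simp add: R_Omega)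
  also have "\<dots> = R b (T \<Omega>)" using M_R_commute[OF T] .
  also have "\<dots> = R b (S \<Omega>)" using e by simp
  also have "\<dots> = S (R b \<Omega>)" using M_R_commute[OF S] by simp
  finally show "T (G b) = S (G b)" by (simp add: R_Omega)
qed

lemma jones_comp:
  assumes A1: "subalg P A1" and E1: "retraction P A1 E1" and A2: "subalg P A2" and E2: "retraction P A2 E2"
    and A3: "subalg P A3" and E3: "retraction P A3 E3" and c: "\<forall>a. E1 (E2 a) = E3 a"
  shows "jones A1 (jones A2 v) = jones A3 v"
proof -
  have "jones A1 \<circ> jones A2 = jones A3"
  proof (rule bop_UNIV_eqI)
    show "bop H UNIV (jones A1 \<circ> jones A2)" using bop_comp[OF subspace_UNIV bop_jones[OF A1] bop_jones[OF A2]] .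
    show "bop H UNIV (jones A3)" using bop_jones[OF A3] .
    fix b show "(jones A1 \<circ> jones A2) (G b) = jones A3 (G b)"
      using c by (simp add: jones_G[OF A1 E1] jones_G[OF A2 E2] jones_G[OF A3 E3])
  qed
  then show ?thesis by (metis comp_apply)
qed

lemma iota_compress_square:
  assumes A1: "subalg P A1" and E1: "retraction P A1 E1" and A2: "subalg P A2" and E2: "retraction P A2 E2"
    and A3: "subalg P A3" and E3: "retraction P A3 E3" and c: "\<forall>a. E1 (E2 a) = E3 a"
    and x: "x \<in> M"
  shows "\<iota> A1 (compress A1 (\<iota> A2 (compress A2 x))) = \<iota> A3 (compress A3 x)"
proof (rule Omega_separating_M)
  have z1: "compress A2 x \<in> vN H G A2" using compress_in_vN[OF A2 E2 x] .
  have y1: "\<iota> A2 (compress A2 x) \<in> M" using iota_in_M[OF A2 E2 z1] .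
  have w1: "compress A1 (\<iota> A2 (compress A2 x)) \<in> vN H G A1" using compress_in_vN[OF A1 E1 y1] .
  show "\<iota> A1 (compress A1 (\<iota> A2 (compress A2 x))) \<in> M" using iota_in_M[OF A1 E1 w1] .
  have z3: "compress A3 x \<in> vN H G A3" using compress_in_vN[OF A3 E3 x] .
  show "\<iota> A3 (compress A3 x) \<in> M" using iota_in_M[OF A3 E3 z3] .
  have "\<iota> A1 (compress A1 (\<iota> A2 (compress A2 x))) \<Omega> = compress A1 (\<iota> A2 (compress A2 x)) \<Omega>" using iota_Omega[OF A1 E1 w1] .
  also have "\<dots> = jones A1 (\<iota> A2 (compress A2 x) \<Omega>)" using compress_HA[OF y1 Omega_in_HA[OF A1]] .
  also have "\<iota> A2 (compress A2 x) \<Omega> = compress A2 x \<Omega>" using iota_Omega[OF A2 E2 z1] .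
  also have "compress A2 x \<Omega> = jones A2 (x \<Omega>)" using compress_HA[OF x Omega_in_HA[OF A2]] .
  also have "jones A1 (jones A2 (x \<Omega>)) = jones A3 (x \<Omega>)" using jones_comp[OF A1 E1 A2 E2 A3 E3 c] .
  also have "\<dots> = compress A3 x \<Omega>" using compress_HA[OF x Omega_in_HA[OF A3]] by simp
  also have "\<dots> = \<iota> A3 (compress A3 x) \<Omega>" using iota_Omega[OF A3 E3 z3] by simp
  finally show "\<iota> A1 (compress A1 (\<iota> A2 (compress A2 x))) \<Omega> = \<iota> A3 (compress A3 x) \<Omega>" .
qed

end

theorem theorem4p6:
  fixes P :: "('a::ring_1) pvn" and H :: "('h::ab_group_add) hsp" and \<Gamma> :: "'a \<Rightarrow> 'h"
    and A00 A01 A10 :: "'a set" and E00 E01 E10 :: "'a \<Rightarrow> 'a"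
  assumes "fin_pvn P"
    and "subalg P A00" and "subalg P A01" and "subalg P A10"
    and "A00 \<subseteq> A01" and "A00 \<subseteq> A10"
    and "retraction P A00 E00" and "retraction P A01 E01" and "retraction P A10 E10"
    and "\<forall>a. E10 (E01 a) = E00 a" and "\<forall>a. E01 (E10 a) = E00 a"
    and "hilb H" and "emb P H \<Gamma>" and "hcl H (range \<Gamma>) = UNIV"
  shows "\<forall>x\<in>vN H \<Gamma> UNIV.
     iota P H \<Gamma> A10 UNIV (cexp P H \<Gamma> A10 UNIV E10 (iota P H \<Gamma> A01 UNIV (cexp P H \<Gamma> A01 UNIV E01 x)))
       = iota P H \<Gamma> A00 UNIV (cexp P H \<Gamma> A00 UNIV E00 x) \<and>
     iota P H \<Gamma> A00 UNIV (cexp P H \<Gamma> A00 UNIV E00 x)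
       = iota P H \<Gamma> A01 UNIV (cexp P H \<Gamma> A01 UNIV E01 (iota P H \<Gamma> A10 UNIV (cexp P H \<Gamma> A10 UNIV E10 x)))"
proof -
  interpret tracial_gns H P \<Gamma>
    by unfold_locales (use assms in simp_all)
  have "cexp P H \<Gamma> A00 UNIV E00 = compress A00" "cexp P H \<Gamma> A01 UNIV E01 = compress A01"
    "cexp P H \<Gamma> A10 UNIV E10 = compress A10"
    using cexp_eq_compress assms(2-4,7-9) by blast+
  then show ?thesis
    using iota_compress_square[OF assms(4,9,3,8,2,7,10)] iota_compress_square[OF assms(3,8,4,9,2,7,11)]
    by simp
qed

end
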